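(* Let $G=G_1^{t_1}\square G_2^{t_2}\square \cdots \square G_k^{t_k}$ be a connected graph decomposed into its Cartesian prime factors, where $G_1,\ldots,G_k$ are pairwise non-isomorphic connected prime graphs and $t_1,\ldots,t_k$ are positive integers. Then $$\theta(G)=\max\left\{\left(\theta(G_i^{t_i})-1\right)\cdot \frac{|G|}{|G_i^{t_i}|} \; : \; i=1,\ldots,k\right\}+1.$$
   Context: Graphs are finite and simple; $|H|$ denotes the number of vertices of $H$. A vertex coloring of a graph is distinguishing if the identity is the only automorphism preserving it. The distinguishing threshold $\theta(H)$ of a graph $H$ is the minimum number $t$ such that for every $k\geq t$, every vertex coloring of $H$ using $k$ colors is distinguishing. The Cartesian product $G\square H$ has vertex set $V(G)\times V(H)$, with $(g,h)\sim(g',h')$ iff either $g=g'$ and $hh'\in E(H)$, or $gg'\in E(G)$ and $h=h'$; $H^t$ denotes the $t$-th Cartesian power. A graph is prime if it is not isomorphic to a Cartesian product of two graphs both non-isomorphic to it. *)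

theory Defs
  imports Main
begin

type_synonym 'a graph = "'a set \<times> ('a \<Rightarrow> 'a \<Rightarrow> bool)"

definition verts :: "'a graph \<Rightarrow> 'a set" where "verts G = fst G"
definition adj :: "'a graph \<Rightarrow> 'a \<Rightarrow> 'a \<Rightarrow> bool" where "adj G = snd G"

definition graph :: "'a graph \<Rightarrow> bool" where
  "graph G \<longleftrightarrow> finite (verts G)
     \<and> (\<forall>x y. adj G x y \<longrightarrow> x \<in> verts G \<and> y \<in> verts G)
     \<and> (\<forall>x y. adj G x y \<longrightarrow> adj G y x)
     \<and> (\<forall>x. \<not> adj G x x)"

definition connected_graph :: "'a graph \<Rightarrow> bool" where
  "connected_graph G \<longleftrightarrow> verts G \<noteq> {}
     \<and> (\<forall>x\<in>verts G. \<forall>y\<in>verts G. (adj G)\<^sup>*\<^sup>* x y)"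

definition iso :: "'a graph \<Rightarrow> 'b graph \<Rightarrow> bool" where
  "iso G H \<longleftrightarrow> (\<exists>f. bij_betw f (verts G) (verts H)
     \<and> (\<forall>x\<in>verts G. \<forall>y\<in>verts G. adj G x y \<longleftrightarrow> adj H (f x) (f y)))"

definition cart :: "'a graph \<Rightarrow> 'b graph \<Rightarrow> ('a \<times> 'b) graph" where
  "cart G H = (verts G \<times> verts H,
     \<lambda>(g, h) (g', h'). (g = g' \<and> g \<in> verts G \<and> adj H h h')
                     \<or> (adj G g g' \<and> h = h' \<and> h \<in> verts H))"

definition cartprod :: "'a graph list \<Rightarrow> 'a list graph" where
  "cartprod Hs =
    ({xs. length xs = length Hs \<and> (\<forall>j<length Hs. xs ! j \<in> verts (Hs ! j))},
     \<lambda>xs ys. length xs = length Hs \<and> (\<forall>j<length Hs. xs ! j \<in> verts (Hs ! j))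
           \<and> length ys = length Hs \<and> (\<forall>j<length Hs. ys ! j \<in> verts (Hs ! j))
           \<and> (\<exists>j<length Hs. adj (Hs ! j) (xs ! j) (ys ! j)
                 \<and> (\<forall>l<length Hs. l \<noteq> j \<longrightarrow> xs ! l = ys ! l)))"

definition cpower :: "'a graph \<Rightarrow> nat \<Rightarrow> 'a list graph" where
  "cpower H t = cartprod (replicate t H)"

text \<open>Factors are taken on vertex type nat, which is no loss since all graphs
  are finite and everything is isomorphism invariant.\<close>
definition prime_graph :: "'a graph \<Rightarrow> bool" where
  "prime_graph G \<longleftrightarrow> \<not> (\<exists>(H::nat graph) (K::nat graph). graph H \<and> graph K
      \<and> iso G (cart H K) \<and> \<not> iso H G \<and> \<not> iso K G)"

definition automorphism :: "'a graph \<Rightarrow> ('a \<Rightarrow> 'a) \<Rightarrow> bool" where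
  "automorphism G f \<longleftrightarrow> bij_betw f (verts G) (verts G)
     \<and> (\<forall>x\<in>verts G. \<forall>y\<in>verts G. adj G x y \<longleftrightarrow> adj G (f x) (f y))"

definition distinguishing :: "'a graph \<Rightarrow> ('a \<Rightarrow> nat) \<Rightarrow> bool" where
  "distinguishing G c \<longleftrightarrow> (\<forall>f. automorphism G f \<longrightarrow> (\<forall>v\<in>verts G. c (f v) = c v)
       \<longrightarrow> (\<forall>v\<in>verts G. f v = v))"

definition dist_threshold :: "'a graph \<Rightarrow> nat" where
  "dist_threshold G = (LEAST t. t \<ge> 1 \<and> (\<forall>k\<ge>t. \<forall>c :: 'a \<Rightarrow> nat.
       card (c ` verts G) = k \<longrightarrow> distinguishing G c))"

end

theory Submission
  imports Defs "HOL-Library.Nat_Bijection"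
begin
lemma graphD:
  assumes "graph G"
  shows "finite (verts G)" "adj G x y \<Longrightarrow> x \<in> verts G" "adj G x y \<Longrightarrow> y \<in> verts G"
    "adj G x y \<Longrightarrow> adj G y x" "\<not> adj G x x"
  using assms unfolding graph_def by auto

definition graph_iso :: "'a graph \<Rightarrow> 'b graph \<Rightarrow> ('a \<Rightarrow> 'b) \<Rightarrow> bool" where
  "graph_iso G H \<phi> \<longleftrightarrow> bij_betw \<phi> (verts G) (verts H)
     \<and> (\<forall>x\<in>verts G. \<forall>y\<in>verts G. adj G x y \<longleftrightarrow> adj H (\<phi> x) (\<phi> y))"

lemma iso_iff_graph_iso: "iso G H \<longleftrightarrow> (\<exists>\<phi>. graph_iso G H \<phi>)"
  unfolding iso_def graph_iso_def ..

lemma automorphism_iff_graph_iso: "automorphism G f \<longleftrightarrow> graph_iso G G f"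
  unfolding automorphism_def graph_iso_def ..

lemma graph_isoI:
  assumes "bij_betw \<phi> (verts G) (verts H)"
    and "\<And>x y. x \<in> verts G \<Longrightarrow> y \<in> verts G \<Longrightarrow> adj G x y \<longleftrightarrow> adj H (\<phi> x) (\<phi> y)"
  shows "graph_iso G H \<phi>"
  using assms unfolding graph_iso_def by blast

lemma graph_isoD:
  assumes "graph_iso G H \<phi>"
  shows "bij_betw \<phi> (verts G) (verts H)" "inj_on \<phi> (verts G)" "x \<in> verts G \<Longrightarrow> \<phi> x \<in> verts H"
    "x \<in> verts G \<Longrightarrow> y \<in> verts G \<Longrightarrow> adj G x y \<longleftrightarrow> adj H (\<phi> x) (\<phi> y)"
  using assms unfolding graph_iso_def bij_betw_def by auto

lemma graph_iso_id: "graph_iso G G id"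
  by (rule graph_isoI) auto

lemma graph_iso_comp:
  assumes "graph_iso G H \<phi>" "graph_iso H K \<psi>"
  shows "graph_iso G K (\<psi> \<circ> \<phi>)"
  using assms by (intro graph_isoI) (auto intro: bij_betw_trans dest: graph_isoD)

lemma graph_iso_inv:
  assumes "graph_iso G H \<phi>"
  shows "graph_iso H G (inv_into (verts G) \<phi>)"
proof (rule graph_isoI)
  have bij: "bij_betw \<phi> (verts G) (verts H)" using graph_isoD(1)[OF assms] .
  then show inv: "bij_betw (inv_into (verts G) \<phi>) (verts H) (verts G)" by (rule bij_betw_inv_into)
  fix x y assume "x \<in> verts H" "y \<in> verts H"
  with bij graph_isoD(4)[OF assms, of "inv_into (verts G) \<phi> x" "inv_into (verts G) \<phi> y"]
  show "adj H x y \<longleftrightarrow> adj G (inv_into (verts G) \<phi> x) (inv_into (verts G) \<phi> y)"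
    by (simp add: bij_betw_inv_into_right bij_betwE[OF inv])
qed

lemma iso_refl: "iso G G"
  using graph_iso_id iso_iff_graph_iso by blast

lemma iso_sym: "iso G H \<Longrightarrow> iso H G"
  unfolding iso_iff_graph_iso using graph_iso_inv by blast

lemma iso_trans [trans]: "iso G H \<Longrightarrow> iso H K \<Longrightarrow> iso G K"
  unfolding iso_iff_graph_iso using graph_iso_comp by blast

lemma iso_card: "iso G H \<Longrightarrow> card (verts G) = card (verts H)"
  unfolding iso_def using bij_betw_same_card by blast

lemma automorphismD:
  assumes "automorphism G f"
  shows "bij_betw f (verts G) (verts G)" "inj_on f (verts G)" "x \<in> verts G \<Longrightarrow> f x \<in> verts G"
    "x \<in> verts G \<Longrightarrow> y \<in> verts G \<Longrightarrow> adj G x y \<longleftrightarrow> adj G (f x) (f y)"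
  using graph_isoD[of G G f] assms unfolding automorphism_iff_graph_iso by simp_all

lemma automorphism_inv:
  assumes "automorphism G f"
  shows "automorphism G (inv_into (verts G) f)"
  using graph_iso_inv assms unfolding automorphism_iff_graph_iso by blast

lemma automorphism_conj:
  assumes "graph_iso G H \<phi>" "automorphism G f"
  shows "automorphism H (\<phi> \<circ> f \<circ> inv_into (verts G) \<phi>)"
  using assms graph_iso_comp graph_iso_inv unfolding automorphism_iff_graph_iso by metis

lemma iso_nat_copy:
  fixes H :: "'a graph"
  assumes "graph H"
  obtains H' :: "nat graph" where "graph H'" "iso H H'"
proof -
  obtain f :: "'a \<Rightarrow> nat" and n where f: "f ` verts H = {i. i < n}" "inj_on f (verts H)"
    using finite_imp_inj_to_nat_seg graphD(1)[OF assms] by metis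
  let ?g = "inv_into (verts H) f"
  define H' where "H' = (f ` verts H, \<lambda>a b. a \<in> f ` verts H \<and> b \<in> f ` verts H \<and> adj H (?g a) (?g b))"
  have verts_H': "verts H' = f ` verts H" unfolding H'_def verts_def by simp
  have adj_H': "adj H' a b \<longleftrightarrow> a \<in> f ` verts H \<and> b \<in> f ` verts H \<and> adj H (?g a) (?g b)" for a b
    unfolding H'_def adj_def by simp
  have "graph H'"
    unfolding graph_def verts_H' adj_H' using f(1) graphD[OF assms] by (simp add: inv_into_into)
  moreover have "iso H H'"
    unfolding iso_iff_graph_iso
    by (rule exI, rule graph_isoI[where \<phi>=f]) (use f(2) in \<open>auto simp: verts_H' adj_H' inj_on_imp_bij_betw\<close>)
  ultimately show thesis using that by blast
qed

definition induced :: "'a graph \<Rightarrow> 'a set \<Rightarrow> 'a graph" where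
  "induced G S = (S, \<lambda>x y. x \<in> S \<and> y \<in> S \<and> adj G x y)"

lemma verts_induced [simp]: "verts (induced G S) = S"
  unfolding induced_def verts_def by simp

lemma adj_induced: "adj (induced G S) x y \<longleftrightarrow> x \<in> S \<and> y \<in> S \<and> adj G x y"
  unfolding induced_def adj_def by simp

lemma graph_induced:
  assumes "graph G" "S \<subseteq> verts G"
  shows "graph (induced G S)"
  unfolding graph_def verts_induced adj_induced
  using assms(2) graphD[OF assms(1)] finite_subset[OF assms(2)] by blast

lemma iso_induced_image:
  assumes "automorphism G f" "S \<subseteq> verts G"
  shows "iso (induced G S) (induced G (f ` S))"
  unfolding iso_iff_graph_iso
proof (intro exI graph_isoI)
  show "bij_betw f (verts (induced G S)) (verts (induced G (f ` S)))"
    using inj_on_subset[OF automorphismD(2)[OF assms(1)] assms(2)] by (simp add: inj_on_imp_bij_betw)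
  fix x y assume "x \<in> verts (induced G S)" "y \<in> verts (induced G S)"
  then show "adj (induced G S) x y \<longleftrightarrow> adj (induced G (f ` S)) (f x) (f y)"
    using assms automorphismD(4)[OF assms(1)] by (auto simp: adj_induced)
qed

lemma verts_cart: "verts (cart H K) = verts H \<times> verts K"
  unfolding cart_def verts_def by simp

lemma adj_cart: "adj (cart H K) (g, h) (g', h') \<longleftrightarrow>
   (g = g' \<and> g \<in> verts H \<and> adj K h h') \<or> (adj H g g' \<and> h = h' \<and> h \<in> verts K)"
  unfolding cart_def adj_def by simp

lemma graph_cart:
  fixes H :: "'a graph" and K :: "'b graph"
  assumes "graph H" "graph K"
  shows "graph (cart H K)"
  unfolding graph_def verts_cart
proof (intro conjI allI impI)
  show "finite (verts H \<times> verts K)" using graphD(1)[OF assms(1)] graphD(1)[OF assms(2)] by (rule finite_cartesian_product)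
  fix x y assume a: "adj (cart H K) x y"
  obtain g h g' h' where xy: "x = (g, h)" "y = (g', h')" by fastforce
  show "x \<in> verts H \<times> verts K" "y \<in> verts H \<times> verts K" "adj (cart H K) y x"
    using a unfolding xy adj_cart using graphD[OF assms(1)] graphD[OF assms(2)] by auto
next
  fix x :: "'a \<times> 'b"
  obtain g h where xy: "x = (g, h)" by fastforce
  show "\<not> adj (cart H K) x x" unfolding xy adj_cart using graphD[OF assms(1)] graphD[OF assms(2)] by auto
qed

lemma iso_cart:
  assumes "iso H H'" "iso K K'"
  shows "iso (cart H K) (cart H' K')"
proof -
  obtain f g where f: "graph_iso H H' f" and g: "graph_iso K K' g"
    using assms unfolding iso_iff_graph_iso by blast
  have "graph_iso (cart H K) (cart H' K') (map_prod f g)"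
  proof (rule graph_isoI)
    show "bij_betw (map_prod f g) (verts (cart H K)) (verts (cart H' K'))"
      unfolding verts_cart using bij_betw_map_prod[OF graph_isoD(1)[OF f] graph_isoD(1)[OF g]] .
    fix x y assume xy: "x \<in> verts (cart H K)" "y \<in> verts (cart H K)"
    obtain a b a' b' where xy': "x = (a, b)" "y = (a', b')" by fastforce
    have v: "a \<in> verts H" "a' \<in> verts H" "b \<in> verts K" "b' \<in> verts K"
      using xy unfolding xy' verts_cart by blast+
    have "f a = f a' \<longleftrightarrow> a = a'" "g b = g b' \<longleftrightarrow> b = b'"
      using graph_isoD(2)[OF f] graph_isoD(2)[OF g] v unfolding inj_on_def by blast+
    moreover have "f a \<in> verts H'" "g b \<in> verts K'" using graph_isoD(3)[OF f] graph_isoD(3)[OF g] v by blast+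
    ultimately show "adj (cart H K) x y \<longleftrightarrow> adj (cart H' K') (map_prod f g x) (map_prod f g y)"
      unfolding xy' map_prod_simp adj_cart using v graph_isoD(4)[OF f] graph_isoD(4)[OF g] by auto
  qed
  then show ?thesis unfolding iso_iff_graph_iso by blast
qed


lemma prime_graph_cart_trivial_factor:
  fixes H :: "'b graph" and K :: "'c graph"
  assumes "prime_graph F" "graph H" "graph K" "iso F (cart H K)" "card (verts H) \<ge> 2"
  shows "card (verts K) < 2"
proof (rule ccontr)
  assume K: "\<not> card (verts K) < 2"
  obtain H' :: "nat graph" where H': "graph H'" "iso H H'" using iso_nat_copy[OF assms(2)] .
  obtain K' :: "nat graph" where K': "graph K'" "iso K K'" using iso_nat_copy[OF assms(3)] .
  have "card (verts F) = card (verts H) * card (verts K)"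
    using iso_card[OF assms(4)] by (simp add: verts_cart card_cartesian_product)
  moreover have "card (verts H) * 2 \<le> card (verts H) * card (verts K)"
    "2 * card (verts K) \<le> card (verts H) * card (verts K)"
    using assms(5) K by simp_all
  ultimately have "card (verts H) < card (verts F)" "card (verts K) < card (verts F)"
    using assms(5) K by linarith+
  then have "\<not> iso H' F" "\<not> iso K' F"
    using iso_card[of H H'] iso_card[of K K'] iso_card[of H' F] iso_card[of K' F] H'(2) K'(2) by auto
  moreover have "iso F (cart H' K')" using iso_trans[OF assms(4) iso_cart[OF H'(2) K'(2)]] .
  ultimately show False using assms(1) H'(1) K'(1) unfolding prime_graph_def by (simp only: not_ex) blast
qed

definition gdist :: "'a graph \<Rightarrow> 'a \<Rightarrow> 'a \<Rightarrow> nat" where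
  "gdist G x y = (LEAST n. (adj G ^^ n) x y)"

lemma relpowp_adj_in_verts:
  assumes "graph G" "(adj G ^^ n) x y" "x \<in> verts G"
  shows "y \<in> verts G"
  using assms(2,3)
proof (induction n arbitrary: y)
  case (Suc n)
  then obtain z where "(adj G ^^ n) x z" "adj G z y" by auto
  then show ?case using graphD(3)[OF assms(1)] by blast
qed simp

lemma gdist_walk:
  assumes "(adj G)\<^sup>*\<^sup>* x y"
  shows "(adj G ^^ gdist G x y) x y"
  using assms unfolding gdist_def rtranclp_power by (metis LeastI_ex)

lemma gdist_le: "(adj G ^^ n) x y \<Longrightarrow> gdist G x y \<le> n"
  unfolding gdist_def by (rule Least_le)

lemma gdist_triangle:
  assumes "(adj G)\<^sup>*\<^sup>* x y" "(adj G)\<^sup>*\<^sup>* y z"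
  shows "gdist G x z \<le> gdist G x y + gdist G y z"
proof (rule gdist_le)
  show "(adj G ^^ (gdist G x y + gdist G y z)) x z"
    using gdist_walk[OF assms(1)] gdist_walk[OF assms(2)] by (auto simp: relpowp_add)
qed

lemma gdist_self [simp]: "gdist G x x = 0"
  using gdist_le[where G=G and n=0 and x=x and y=x] by simp

lemma gdist_eq_0_iff:
  assumes "(adj G)\<^sup>*\<^sup>* x y"
  shows "gdist G x y = 0 \<longleftrightarrow> x = y"
  using gdist_walk[OF assms] by auto

lemma gdist_adj_le_1: "adj G x y \<Longrightarrow> gdist G x y \<le> 1"
  using gdist_le[where G=G and n=1 and x=x and y=y] by auto

lemma automorphism_relpowp:
  assumes "automorphism G f" "graph G" "(adj G ^^ n) x y" "x \<in> verts G"
  shows "(adj G ^^ n) (f x) (f y)"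
  using assms(3,4)
proof (induction n arbitrary: y)
  case (Suc n)
  then obtain z where z: "(adj G ^^ n) x z" "adj G z y" by auto
  have "z \<in> verts G" "y \<in> verts G"
    using relpowp_adj_in_verts[OF assms(2) z(1) Suc.prems(2)] graphD(3)[OF assms(2) z(2)] by auto
  then have "adj G (f z) (f y)" using automorphismD(4)[OF assms(1)] z(2) by blast
  then show ?case using Suc.IH[OF z(1) Suc.prems(2)] by auto
qed simp

lemma automorphism_gdist:
  assumes "automorphism G f" "graph G" "x \<in> verts G" "y \<in> verts G"
  shows "gdist G (f x) (f y) = gdist G x y"
proof -
  let ?g = "inv_into (verts G) f"
  have "(adj G ^^ n) x y \<longleftrightarrow> (adj G ^^ n) (f x) (f y)" for n
  proof
    assume "(adj G ^^ n) (f x) (f y)"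
    then have "(adj G ^^ n) (?g (f x)) (?g (f y))"
      using automorphism_relpowp[OF automorphism_inv[OF assms(1)] assms(2)] automorphismD(3)[OF assms(1)]
        assms(3) by blast
    then show "(adj G ^^ n) x y"
      using automorphismD(2)[OF assms(1)] assms(3,4) by simp
  qed (rule automorphism_relpowp[OF assms(1,2) _ assms(3)])
  then show ?thesis unfolding gdist_def by simp
qed

definition convex_in :: "'a graph \<Rightarrow> 'a set \<Rightarrow> bool" where
  "convex_in G S \<longleftrightarrow> S \<subseteq> verts G \<and> (\<forall>u\<in>S. \<forall>v\<in>S. \<forall>w\<in>verts G.
      gdist G u w + gdist G w v = gdist G u v \<longrightarrow> w \<in> S)"

lemma convex_in_image:
  assumes "automorphism G f" "graph G" "convex_in G S"
  shows "convex_in G (f ` S)"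
  unfolding convex_in_def
proof (intro conjI ballI impI)
  have S: "S \<subseteq> verts G" using assms(3) unfolding convex_in_def by blast
  then show "f ` S \<subseteq> verts G" using automorphismD(3)[OF assms(1)] by blast
  fix u' v' w' assume u': "u' \<in> f ` S" and v': "v' \<in> f ` S" and w': "w' \<in> verts G"
    and geodesic: "gdist G u' w' + gdist G w' v' = gdist G u' v'"
  obtain u v where uv: "u \<in> S" "v \<in> S" "u' = f u" "v' = f v" using u' v' by blast
  let ?w = "inv_into (verts G) f w'"
  have w: "?w \<in> verts G" "f ?w = w'"
    using bij_betw_inv_into_right[OF automorphismD(1)[OF assms(1)] w']
      bij_betwE[OF bij_betw_inv_into[OF automorphismD(1)[OF assms(1)]]] w' by auto
  have "gdist G u ?w + gdist G ?w v = gdist G u v"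
    using geodesic automorphism_gdist[OF assms(1,2)] S uv w by (metis subsetD)
  then have "?w \<in> S" using assms(3) uv(1,2) w(1) unfolding convex_in_def by blast
  then show "w' \<in> f ` S" using w(2) by force
qed

lemma verts_cartprod:
  "verts (cartprod Ts) = {xs. length xs = length Ts \<and> (\<forall>j<length Ts. xs!j \<in> verts (Ts!j))}"
  unfolding cartprod_def verts_def by simp

lemma adj_cartprod: "adj (cartprod Ts) x y \<longleftrightarrow> x \<in> verts (cartprod Ts) \<and> y \<in> verts (cartprod Ts)
   \<and> (\<exists>j<length Ts. adj (Ts!j) (x!j) (y!j) \<and> (\<forall>l<length Ts. l \<noteq> j \<longrightarrow> x!l = y!l))"
  unfolding verts_cartprod unfolding cartprod_def adj_def by simp

lemma length_cartprod_vert: "x \<in> verts (cartprod Ts) \<Longrightarrow> length x = length Ts"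
  unfolding verts_cartprod by simp

lemma nth_cartprod_vert: "x \<in> verts (cartprod Ts) \<Longrightarrow> j < length Ts \<Longrightarrow> x!j \<in> verts (Ts!j)"
  unfolding verts_cartprod by simp

lemma graph_cartprod:
  assumes "\<forall>H\<in>set Ts. graph H"
  shows "graph (cartprod Ts)"
proof -
  have "verts (cartprod Ts) \<subseteq> {xs. set xs \<subseteq> \<Union>(verts ` set Ts) \<and> length xs = length Ts}"
    unfolding verts_cartprod by (auto simp: in_set_conv_nth) (metis nth_mem)
  moreover have "finite (\<Union>(verts ` set Ts))" using assms graphD(1) by blast
  ultimately have "finite (verts (cartprod Ts))" using finite_lists_length_eq finite_subset by blast
  moreover have "\<forall>j<length Ts. graph (Ts!j)" using assms by simp
  then have "\<forall>x y. adj (cartprod Ts) x y \<longrightarrow> adj (cartprod Ts) y x" "\<forall>x. \<not> adj (cartprod Ts) x x"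
    unfolding adj_cartprod by (metis graphD(4), metis graphD(5))
  ultimately show ?thesis unfolding graph_def using adj_cartprod by blast
qed

definition connected_graphs :: "'a graph list \<Rightarrow> bool" where
  "connected_graphs Ts \<longleftrightarrow> (\<forall>H\<in>set Ts. graph H \<and> connected_graph H)"

lemma connected_graphsD:
  assumes "connected_graphs Ts" "j < length Ts"
  shows "graph (Ts!j)" "verts (Ts!j) \<noteq> {}"
    "a \<in> verts (Ts!j) \<Longrightarrow> b \<in> verts (Ts!j) \<Longrightarrow> (adj (Ts!j))\<^sup>*\<^sup>* a b"
  using assms nth_mem unfolding connected_graphs_def connected_graph_def by blast+

lemma connected_graphs_append [simp]:
  "connected_graphs (Xs @ Ys) \<longleftrightarrow> connected_graphs Xs \<and> connected_graphs Ys"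
  unfolding connected_graphs_def by auto

lemma cartprod_update_in_verts:
  assumes "x \<in> verts (cartprod Ts)" "j < length Ts" "a \<in> verts (Ts!j)"
  shows "x[j := a] \<in> verts (cartprod Ts)"
  using assms unfolding verts_cartprod by (auto simp: nth_list_update)

lemma adj_cartprod_update:
  assumes "x \<in> verts (cartprod Ts)" "j < length Ts" "adj (Ts!j) a b" "graph (Ts!j)"
  shows "adj (cartprod Ts) (x[j := a]) (x[j := b])"
proof -
  have "a \<in> verts (Ts!j)" "b \<in> verts (Ts!j)" using graphD(2,3)[OF assms(4) assms(3)] .
  then show ?thesis
    using cartprod_update_in_verts[OF assms(1,2)] assms(2,3) length_cartprod_vert[OF assms(1)]
    unfolding adj_cartprod by (auto simp: nth_list_update)
qed

lemma relpowp_cartprod_update: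
  assumes "x \<in> verts (cartprod Ts)" "j < length Ts" "graph (Ts!j)" "(adj (Ts!j) ^^ n) (x!j) a"
  shows "(adj (cartprod Ts) ^^ n) x (x[j := a])"
  using assms(4)
proof (induction n arbitrary: a)
  case (Suc n)
  then obtain b where b: "(adj (Ts!j) ^^ n) (x!j) b" "adj (Ts!j) b a" by auto
  have "adj (cartprod Ts) (x[j := b]) (x[j := a])" using adj_cartprod_update[OF assms(1,2) b(2) assms(3)] .
  then show ?case using Suc.IH[OF b(1)] by auto
qed simp

text \<open>The walk changes the coordinates one at a time, from left to right.\<close>

lemma relpowp_cartprod_sum_gdist:
  assumes "connected_graphs Ts" "x \<in> verts (cartprod Ts)" "y \<in> verts (cartprod Ts)"
  shows "(adj (cartprod Ts) ^^ (\<Sum>j<length Ts. gdist (Ts!j) (x!j) (y!j))) x y"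
proof -
  let ?n = "length Ts" and ?z = "\<lambda>k. take k y @ drop k x"
  have lx: "length x = ?n" and ly: "length y = ?n" using assms(2,3) length_cartprod_vert by blast+
  have "?z k \<in> verts (cartprod Ts) \<and> (adj (cartprod Ts) ^^ (\<Sum>j<k. gdist (Ts!j) (x!j) (y!j))) x (?z k)"
    if "k \<le> ?n" for k
    using that
  proof (induction k)
    case 0 then show ?case using assms(2) by simp
  next
    case (Suc k)
    then have k: "k < ?n" by simp
    have zk: "?z k \<in> verts (cartprod Ts)" using Suc by simp
    have step: "(?z k)[k := y!k] = ?z (Suc k)"
      by (rule nth_equalityI) (use k lx ly in \<open>auto simp: nth_append nth_list_update min_def take_Suc_conv_app_nth\<close>)
    have v: "x!k \<in> verts (Ts!k)" "y!k \<in> verts (Ts!k)" using assms(2,3) k nth_cartprod_vert by blast+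
    have "?z k ! k = x!k" using k lx ly by (simp add: nth_append)
    then have "(adj (Ts!k) ^^ gdist (Ts!k) (x!k) (y!k)) (?z k ! k) (y!k)"
      using gdist_walk[OF connected_graphsD(3)[OF assms(1) k v]] by simp
    then have "(adj (cartprod Ts) ^^ gdist (Ts!k) (x!k) (y!k)) (?z k) (?z (Suc k))"
      using relpowp_cartprod_update[OF zk k connected_graphsD(1)[OF assms(1) k]] step by metis
    moreover have "?z (Suc k) \<in> verts (cartprod Ts)"
      using cartprod_update_in_verts[OF zk k v(2)] step by simp
    ultimately show ?case using Suc by (auto simp: relpowp_add)
  qed
  from this[of ?n] show ?thesis using lx ly by simp
qed

lemma sum_gdist_le_relpowp:
  assumes "connected_graphs Ts" "(adj (cartprod Ts) ^^ n) x z"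
    "x \<in> verts (cartprod Ts)" "z \<in> verts (cartprod Ts)"
  shows "(\<Sum>j<length Ts. gdist (Ts!j) (x!j) (z!j)) \<le> n"
  using assms(2,3)
proof (induction n arbitrary: x)
  case (Suc n)
  then obtain y where y: "adj (cartprod Ts) x y" "(adj (cartprod Ts) ^^ n) y z"
    using relpowp_Suc_D2 by metis
  then have yv: "y \<in> verts (cartprod Ts)" unfolding adj_cartprod by blast
  obtain i where i: "i < length Ts" "adj (Ts!i) (x!i) (y!i)" "\<forall>l<length Ts. l \<noteq> i \<longrightarrow> x!l = y!l"
    using y(1) unfolding adj_cartprod by blast
  have "gdist (Ts!j) (x!j) (z!j) \<le> gdist (Ts!j) (y!j) (z!j) + (if j = i then 1 else 0)"
    if j: "j < length Ts" for j
  proof (cases "j = i")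
    case True
    have v: "x!i \<in> verts (Ts!i)" "y!i \<in> verts (Ts!i)" "z!i \<in> verts (Ts!i)"
      using Suc.prems yv assms(4) i(1) nth_cartprod_vert by blast+
    have "gdist (Ts!i) (x!i) (z!i) \<le> gdist (Ts!i) (x!i) (y!i) + gdist (Ts!i) (y!i) (z!i)"
      by (rule gdist_triangle; rule connected_graphsD(3)[OF assms(1) i(1)]) (use v in simp_all)
    then show ?thesis using gdist_adj_le_1[OF i(2)] True by simp
  qed (use i(3) j in simp)
  then have "(\<Sum>j<length Ts. gdist (Ts!j) (x!j) (z!j))
      \<le> (\<Sum>j<length Ts. gdist (Ts!j) (y!j) (z!j) + (if j = i then 1 else 0))"
    by (intro sum_mono) simp
  also have "\<dots> = (\<Sum>j<length Ts. gdist (Ts!j) (y!j) (z!j)) + 1"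
    using i(1) by (simp add: sum.distrib)
  finally show ?case using Suc.IH[OF y(2) yv] by simp
qed simp

lemma gdist_cartprod:
  assumes "connected_graphs Ts" "x \<in> verts (cartprod Ts)" "y \<in> verts (cartprod Ts)"
  shows "gdist (cartprod Ts) x y = (\<Sum>j<length Ts. gdist (Ts!j) (x!j) (y!j))"
proof (rule antisym)
  show "gdist (cartprod Ts) x y \<le> (\<Sum>j<length Ts. gdist (Ts!j) (x!j) (y!j))"
    using gdist_le relpowp_cartprod_sum_gdist[OF assms] by metis
  have "(adj (cartprod Ts))\<^sup>*\<^sup>* x y"
    using relpowp_cartprod_sum_gdist[OF assms] rtranclp_power by metis
  then show "(\<Sum>j<length Ts. gdist (Ts!j) (x!j) (y!j)) \<le> gdist (cartprod Ts) x y"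
    using sum_gdist_le_relpowp[OF assms(1) gdist_walk assms(2,3)] by blast
qed

lemma cartprod_nonempty:
  assumes "connected_graphs Ts"
  shows "verts (cartprod Ts) \<noteq> {}"
proof -
  have "(SOME v. v \<in> verts (Ts!j)) \<in> verts (Ts!j)" if "j < length Ts" for j
    using connected_graphsD(2)[OF assms that] by (simp add: some_in_eq)
  then have "map (\<lambda>j. SOME v. v \<in> verts (Ts!j)) [0..<length Ts] \<in> verts (cartprod Ts)"
    unfolding verts_cartprod by simp
  then show ?thesis by blast
qed

lemma connected_graph_cartprod:
  assumes "connected_graphs Ts"
  shows "graph (cartprod Ts)" "connected_graph (cartprod Ts)"
proof -
  show "graph (cartprod Ts)"
    using assms graph_cartprod unfolding connected_graphs_def by blast
  show "connected_graph (cartprod Ts)"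
    unfolding connected_graph_def rtranclp_power
    using cartprod_nonempty[OF assms] relpowp_cartprod_sum_gdist[OF assms] by blast
qed

definition layer :: "'a graph list \<Rightarrow> nat \<Rightarrow> 'a list \<Rightarrow> 'a list set" where
  "layer Ts m x = {z \<in> verts (cartprod Ts). \<forall>p<length Ts. p \<noteq> m \<longrightarrow> z!p = x!p}"

lemma layer_subset: "layer Ts m x \<subseteq> verts (cartprod Ts)"
  unfolding layer_def by blast

lemma self_in_layer: "x \<in> verts (cartprod Ts) \<Longrightarrow> x \<in> layer Ts m x"
  unfolding layer_def by blast

lemma iso_layer:
  assumes "connected_graphs Ts" "x \<in> verts (cartprod Ts)" "m < length Ts"
  shows "iso (Ts!m) (induced (cartprod Ts) (layer Ts m x))"
  unfolding iso_iff_graph_iso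
proof (intro exI graph_isoI)
  have lx: "length x = length Ts" using length_cartprod_vert[OF assms(2)] .
  have "layer Ts m x = (\<lambda>a. x[m := a]) ` verts (Ts!m)"
  proof
    show "(\<lambda>a. x[m := a]) ` verts (Ts!m) \<subseteq> layer Ts m x"
      unfolding layer_def using cartprod_update_in_verts[OF assms(2,3)] by auto
    show "layer Ts m x \<subseteq> (\<lambda>a. x[m := a]) ` verts (Ts!m)"
    proof
      fix z assume z: "z \<in> layer Ts m x"
      then have zv: "z \<in> verts (cartprod Ts)" and "\<forall>p<length Ts. p \<noteq> m \<longrightarrow> z!p = x!p"
        unfolding layer_def by auto
      then have "z = x[m := z!m]"
        using assms(3) by (intro nth_equalityI) (auto simp: lx length_cartprod_vert nth_list_update)
      moreover have "z!m \<in> verts (Ts!m)" using nth_cartprod_vert[OF zv assms(3)] .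
      ultimately show "z \<in> (\<lambda>a. x[m := a]) ` verts (Ts!m)" by blast
    qed
  qed
  moreover have "inj_on (\<lambda>a. x[m := a]) (verts (Ts!m))"
    unfolding inj_on_def using assms(3) lx by (metis nth_list_update_eq)
  ultimately show "bij_betw (\<lambda>a. x[m := a]) (verts (Ts!m)) (verts (induced (cartprod Ts) (layer Ts m x)))"
    by (simp add: bij_betw_def)
  fix a b assume ab: "a \<in> verts (Ts!m)" "b \<in> verts (Ts!m)"
  have in_layer: "x[m := a] \<in> layer Ts m x" "x[m := b] \<in> layer Ts m x"
    unfolding layer_def using cartprod_update_in_verts[OF assms(2,3)] ab by auto
  have g: "graph (Ts!m)" using connected_graphsD(1)[OF assms(1,3)] .
  show "adj (Ts!m) a b \<longleftrightarrow> adj (induced (cartprod Ts) (layer Ts m x)) (x[m := a]) (x[m := b])"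
    unfolding adj_induced
  proof
    assume "adj (Ts!m) a b"
    then show "x[m := a] \<in> layer Ts m x \<and> x[m := b] \<in> layer Ts m x \<and> adj (cartprod Ts) (x[m := a]) (x[m := b])"
      using in_layer adj_cartprod_update[OF assms(2,3) _ g] by blast
  next
    assume "x[m := a] \<in> layer Ts m x \<and> x[m := b] \<in> layer Ts m x \<and> adj (cartprod Ts) (x[m := a]) (x[m := b])"
    then obtain j where j: "j < length Ts" "adj (Ts!j) (x[m := a]!j) (x[m := b]!j)"
      "\<forall>l<length Ts. l \<noteq> j \<longrightarrow> x[m := a]!l = x[m := b]!l"
      unfolding adj_cartprod by blast
    show "adj (Ts!m) a b"
    proof (cases "j = m")
      case False
      then have "x[m := a]!j = x[m := b]!j" using j(3) assms(3) lx by (metis nth_list_update_eq)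
      then show ?thesis using j(2) graphD(5)[OF connected_graphsD(1)[OF assms(1) j(1)]] by metis
    qed (use j lx in simp)
  qed
qed

text \<open>Distances in a product add up over the coordinates, so a shortest path between two vertices
  of a layer never leaves it.\<close>

lemma convex_layer:
  assumes "connected_graphs Ts" "m < length Ts"
  shows "convex_in (cartprod Ts) (layer Ts m x)"
  unfolding convex_in_def
proof (intro conjI ballI impI layer_subset)
  fix u v w assume u: "u \<in> layer Ts m x" and v: "v \<in> layer Ts m x" and w: "w \<in> verts (cartprod Ts)"
    and geodesic: "gdist (cartprod Ts) u w + gdist (cartprod Ts) w v = gdist (cartprod Ts) u v"
  let ?d = "\<lambda>a b p. gdist (Ts!p) (a!p) (b!p)"
  have uv: "u \<in> verts (cartprod Ts)" "v \<in> verts (cartprod Ts)" using u v layer_subset by blast+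
  have conn: "(adj (Ts!p))\<^sup>*\<^sup>* (a!p) (b!p)"
    if "p < length Ts" "a \<in> verts (cartprod Ts)" "b \<in> verts (cartprod Ts)" for a b p
    using connected_graphsD(3)[OF assms(1) that(1)] nth_cartprod_vert that by blast
  have "(\<Sum>p<length Ts. ?d u v p) = (\<Sum>p<length Ts. ?d u w p + ?d w v p)"
    using geodesic unfolding gdist_cartprod[OF assms(1) uv] gdist_cartprod[OF assms(1) uv(1) w]
      gdist_cartprod[OF assms(1) w uv(2)] sum.distrib by (rule sym)
  moreover have "?d u v p \<le> ?d u w p + ?d w v p" if "p \<in> {..<length Ts}" for p
    using that by (intro gdist_triangle conn) (simp_all add: uv w)
  ultimately have tight: "?d u v p = ?d u w p + ?d w v p" if "p < length Ts" for p
    using sum_mono_inv[of "\<lambda>p. ?d u v p" "{..<length Ts}"] that by blast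
  have "w!p = x!p" if p: "p < length Ts" "p \<noteq> m" for p
  proof -
    have "u!p = x!p" "v!p = x!p" using u v p unfolding layer_def by blast+
    then have "?d u w p = 0" using tight[OF p(1)] by simp
    then show "w!p = x!p" using gdist_eq_0_iff[OF conn[OF p(1) uv(1) w]] \<open>u!p = x!p\<close> by simp
  qed
  then show "w \<in> layer Ts m x" unfolding layer_def using w by simp
qed

lemma convex_in_update:
  assumes "connected_graphs Ts" "convex_in (cartprod Ts) S" "u \<in> S" "v \<in> S" "l < length Ts"
  shows "u[l := v!l] \<in> S"
proof -
  have uv: "u \<in> verts (cartprod Ts)" "v \<in> verts (cartprod Ts)"
    using assms(2-4) unfolding convex_in_def by blast+
  let ?w = "u[l := v!l]"
  have w: "?w \<in> verts (cartprod Ts)"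
    using cartprod_update_in_verts[OF uv(1) assms(5) nth_cartprod_vert[OF uv(2) assms(5)]] .
  have lu: "length u = length Ts" using length_cartprod_vert[OF uv(1)] .
  have "gdist (Ts!p) (u!p) (?w!p) + gdist (Ts!p) (?w!p) (v!p) = gdist (Ts!p) (u!p) (v!p)"
    if "p < length Ts" for p
    using that lu by (cases "p = l") simp_all
  then have "gdist (cartprod Ts) u ?w + gdist (cartprod Ts) ?w v = gdist (cartprod Ts) u v"
    using gdist_cartprod[OF assms(1)] uv w by (simp add: sum.distrib[symmetric])
  then show ?thesis using assms(2-4) w unfolding convex_in_def by blast
qed

lemma list_eq_iff_nth_update_eq:
  assumes "length s = length s'" "l < length s"
  shows "s = s' \<longleftrightarrow> s!l = s'!l \<and> s[l := c] = s'[l := c]"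
proof
  assume "s!l = s'!l \<and> s[l := c] = s'[l := c]"
  then have "(s[l := c])[l := s!l] = (s'[l := c])[l := s'!l]" by simp
  then show "s = s'" by simp
qed simp

lemma adj_cartprod_split:
  assumes "graph (Ts!l)" "s \<in> verts (cartprod Ts)" "s' \<in> verts (cartprod Ts)" "l < length Ts" "c \<in> verts (Ts!l)"
  shows "adj (cartprod Ts) s s' \<longleftrightarrow>
     (s!l = s'!l \<and> adj (cartprod Ts) (s[l := c]) (s'[l := c]))
     \<or> (adj (Ts!l) (s!l) (s'!l) \<and> s[l := c] = s'[l := c])"
proof -
  have ls: "length s = length Ts" "length s' = length Ts" using assms(2,3) unfolding verts_cartprod by auto
  have uv: "s[l := c] \<in> verts (cartprod Ts)" "s'[l := c] \<in> verts (cartprod Ts)"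
    using cartprod_update_in_verts[OF assms(2,4,5)] cartprod_update_in_verts[OF assms(3,4,5)] by blast+
  show ?thesis
  proof
    assume "adj (cartprod Ts) s s'"
    then obtain j where j: "j < length Ts" "adj (Ts!j) (s!j) (s'!j)" "\<forall>p<length Ts. p \<noteq> j \<longrightarrow> s!p = s'!p"
      unfolding adj_cartprod by blast
    show "(s!l = s'!l \<and> adj (cartprod Ts) (s[l := c]) (s'[l := c])) \<or> (adj (Ts!l) (s!l) (s'!l) \<and> s[l := c] = s'[l := c])"
    proof (cases "j = l")
      case True
      have "s[l := c] = s'[l := c]"
        by (rule nth_equalityI) (use ls j True in \<open>auto simp: nth_list_update\<close>)
      then show ?thesis using j True by simp
    next
      case False
      have "adj (cartprod Ts) (s[l := c]) (s'[l := c])"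
      proof -
        have a1: "adj (Ts!j) (s[l := c]!j) (s'[l := c]!j)" using j False by simp
        have a2: "\<forall>p<length Ts. p \<noteq> j \<longrightarrow> s[l := c]!p = s'[l := c]!p" 
        proof (intro allI impI)
          fix p assume p: "p < length Ts" "p \<noteq> j"
          show "s[l := c]!p = s'[l := c]!p"
            by (cases "p = l") (use j(3) p ls in simp_all)
        qed
        show ?thesis unfolding adj_cartprod using uv j(1) a1 a2 by blast
      qed
      then show ?thesis using j False assms(4) by simp
    qed
  next
    assume "(s!l = s'!l \<and> adj (cartprod Ts) (s[l := c]) (s'[l := c])) \<or> (adj (Ts!l) (s!l) (s'!l) \<and> s[l := c] = s'[l := c])"
    then show "adj (cartprod Ts) s s'"
    proof
      assume h: "s!l = s'!l \<and> adj (cartprod Ts) (s[l := c]) (s'[l := c])"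
      then obtain j where j: "j < length Ts" "adj (Ts!j) (s[l := c]!j) (s'[l := c]!j)"
        "\<forall>p<length Ts. p \<noteq> j \<longrightarrow> s[l := c]!p = s'[l := c]!p"
        unfolding adj_cartprod by blast
      have jl: "j \<noteq> l"
      proof
        assume "j = l"
        then have "adj (Ts!l) c c" using j(2) ls assms(4) by simp
        then show False using graphD(5)[OF assms(1)] by blast
      qed
      have "\<forall>p<length Ts. p \<noteq> j \<longrightarrow> s!p = s'!p"
      proof (intro allI impI)
        fix p assume p: "p < length Ts" "p \<noteq> j"
        show "s!p = s'!p"
        proof (cases "p = l")
          case True then show ?thesis using h by simp
        next
          case False then show ?thesis using j(3) p ls by (metis nth_list_update_neq)
        qed
      qed
      moreover have "adj (Ts!j) (s!j) (s'!j)" using j(2) jl by simp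
      ultimately show ?thesis unfolding adj_cartprod using assms(2,3) j(1) by blast
    next
      assume h: "adj (Ts!l) (s!l) (s'!l) \<and> s[l := c] = s'[l := c]"
      have "\<forall>p<length Ts. p \<noteq> l \<longrightarrow> s!p = s'!p"
        using h ls by (metis nth_list_update_neq)
      then show ?thesis unfolding adj_cartprod using assms(2,3,4) h by blast
    qed
  qed
qed

lemma iso_convex_in_cart_split:
  assumes "connected_graphs Ts" "convex_in (cartprod Ts) S" "l < length Ts" "c \<in> verts (Ts!l)"
  shows "iso (induced (cartprod Ts) S)
    (cart (induced (Ts!l) ((\<lambda>s. s!l) ` S)) (induced (cartprod Ts) ((\<lambda>s. s[l := c]) ` S)))"
  unfolding iso_iff_graph_iso
proof (intro exI graph_isoI)
  let ?G = "cartprod Ts" and ?\<phi> = "\<lambda>s. (s!l, s[l := c])"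
  let ?X = "(\<lambda>s. s!l) ` S" and ?Y = "(\<lambda>s. s[l := c]) ` S"
  have S: "S \<subseteq> verts ?G" using assms(2) unfolding convex_in_def by blast
  have "?\<phi> ` S = ?X \<times> ?Y"
  proof
    show "?X \<times> ?Y \<subseteq> ?\<phi> ` S"
    proof
      fix z assume "z \<in> ?X \<times> ?Y"
      then obtain s1 s2 where s: "s1 \<in> S" "s2 \<in> S" "z = (s1!l, s2[l := c])" by blast
      have "s2[l := s1!l] \<in> S" using convex_in_update[OF assms(1,2) s(2,1) assms(3)] .
      moreover have "length s2 = length Ts" using s(2) S length_cartprod_vert by blast
      then have "?\<phi> (s2[l := s1!l]) = z" using s(3) assms(3) by simp
      ultimately show "z \<in> ?\<phi> ` S" by force
    qed
  qed blast
  moreover have "inj_on ?\<phi> S"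
  proof (rule inj_onI)
    fix s s' assume "s \<in> S" "s' \<in> S" "?\<phi> s = ?\<phi> s'"
    moreover have "length s = length Ts" "length s' = length Ts"
      using \<open>s \<in> S\<close> \<open>s' \<in> S\<close> S length_cartprod_vert by blast+
    ultimately show "s = s'" using list_eq_iff_nth_update_eq[of s s' l c] assms(3) by simp
  qed
  ultimately show "bij_betw ?\<phi> (verts (induced ?G S)) (verts (cart (induced (Ts!l) ?X) (induced ?G ?Y)))"
    by (simp add: bij_betw_def verts_cart)
  fix s s' assume ss: "s \<in> verts (induced ?G S)" "s' \<in> verts (induced ?G S)"
  then have "s \<in> verts ?G" "s' \<in> verts ?G" using S by auto
  from adj_cartprod_split[OF connected_graphsD(1)[OF assms(1,3)] this assms(3,4)]
  show "adj (induced ?G S) s s' \<longleftrightarrow> adj (cart (induced (Ts!l) ?X) (induced ?G ?Y)) (?\<phi> s) (?\<phi> s')"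
    using ss by (auto simp: adj_cart adj_induced)
qed

text \<open>The image of a layer of a prime factor is convex, hence a product of its projection to
  the coordinate l of an edge in it and of the rest; primality makes the latter trivial.\<close>

lemma automorphism_layer_subset:
  assumes "connected_graphs Ts" "prime_graph (Ts!m)" "automorphism (cartprod Ts) f"
    and "x \<in> verts (cartprod Ts)" "y \<in> layer Ts m x" "x \<noteq> y" "m < length Ts"
    and "l < length Ts" "f y \<in> layer Ts l (f x)"
  shows "f ` layer Ts m x \<subseteq> layer Ts l (f x)"
proof
  let ?G = "cartprod Ts" and ?S = "f ` layer Ts m x" and ?c = "f x!l"
  let ?X = "(\<lambda>s. s!l) ` ?S" and ?Y = "(\<lambda>s. s[l := ?c]) ` ?S"
  have gG: "graph ?G" using connected_graph_cartprod(1)[OF assms(1)] .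
  have S: "?S \<subseteq> verts ?G" using automorphismD(3)[OF assms(3)] layer_subset by blast
  have fS: "finite ?S" using finite_subset[OF S graphD(1)[OF gG]] .
  have y: "y \<in> verts ?G" using assms(5) layer_subset by blast
  have fx: "f x \<in> verts ?G" "f x \<in> ?S" "f y \<in> ?S"
    using automorphismD(3)[OF assms(3,4)] self_in_layer[OF assms(4)] assms(5) by blast+
  have c: "?c \<in> verts (Ts!l)" using nth_cartprod_vert[OF fx(1) assms(8)] .
  have "f x \<noteq> f y" using automorphismD(2)[OF assms(3)] assms(4,6) y by (meson inj_on_contraD)
  moreover have "length (f y) = length (f x)" "\<forall>p<length Ts. p \<noteq> l \<longrightarrow> f y!p = f x!p"
    using assms(9) length_cartprod_vert[OF fx(1)] length_cartprod_vert[of "f y"]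
    unfolding layer_def by auto
  ultimately have "f x!l \<noteq> f y!l"
    using length_cartprod_vert[OF fx(1)] by (metis nth_equalityI)
  moreover have "{f x!l, f y!l} \<subseteq> ?X" using fx(2,3) by blast
  ultimately have X: "card ?X \<ge> 2" using fS card_mono[of ?X "{f x!l, f y!l}"] by simp
  have "iso (Ts!m) (induced ?G ?S)"
    using iso_trans[OF iso_layer[OF assms(1,4,7)] iso_induced_image[OF assms(3) layer_subset]] .
  also have "iso (induced ?G ?S) (cart (induced (Ts!l) ?X) (induced ?G ?Y))"
    using iso_convex_in_cart_split[OF assms(1) convex_in_image[OF assms(3) gG convex_layer[OF assms(1,7)]]
        assms(8) c] .
  finally have iso: "iso (Ts!m) (cart (induced (Ts!l) ?X) (induced ?G ?Y))" .
  have "?X \<subseteq> verts (Ts!l)" using S nth_cartprod_vert[OF _ assms(8)] by blast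
  then have gX: "graph (induced (Ts!l) ?X)" using graph_induced connected_graphsD(1)[OF assms(1,8)] by blast
  have "?Y \<subseteq> verts ?G" using S cartprod_update_in_verts[OF _ assms(8) c] by blast
  then have gY: "graph (induced ?G ?Y)" using graph_induced gG by blast
  have Y: "card ?Y < 2" using prime_graph_cart_trivial_factor[OF assms(2) gX gY iso] X by simp
  fix u assume u: "u \<in> ?S"
  have "f x = (f x)[l := ?c]" by simp
  then have fxY: "f x \<in> ?Y" using fx(2) by (rule image_eqI)
  have uY: "u[l := ?c] \<in> ?Y" using u by (rule imageI)
  have "card ?Y \<le> Suc 0" using Y by simp
  note single = iffD1[OF card_le_Suc0_iff_eq[OF finite_imageI[OF fS]] this]
  have eq: "u[l := ?c] = f x" by (rule single[rule_format, OF uY fxY])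
  have "u!p = f x!p" if "p \<noteq> l" for p
  proof -
    have "u!p = u[l := ?c]!p" using that by simp
    then show ?thesis unfolding eq .
  qed
  then show "u \<in> layer Ts l (f x)" unfolding layer_def using u S by blast
qed

lemma iso_automorphism_layer_factors:
  assumes "connected_graphs Ts" "\<forall>H\<in>set Ts. prime_graph H" "automorphism (cartprod Ts) f"
    and "x \<in> verts (cartprod Ts)" "y \<in> layer Ts m x" "x \<noteq> y" "m < length Ts"
    and "l < length Ts" "f y \<in> layer Ts l (f x)"
  shows "iso (Ts!m) (Ts!l)"
proof -
  let ?G = "cartprod Ts" and ?g = "inv_into (verts (cartprod Ts)) f"
  let ?L = "layer Ts m x" and ?L' = "layer Ts l (f x)"
  have fin: "finite ?L" "finite ?L'"
    using finite_subset[OF layer_subset graphD(1)[OF connected_graph_cartprod(1)[OF assms(1)]]] by blast+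
  have inj: "inj_on f ?L" "inj_on ?g ?L'"
    using inj_on_subset[OF automorphismD(2)[OF assms(3)] layer_subset]
      inj_on_subset[OF automorphismD(2)[OF automorphism_inv[OF assms(3)]] layer_subset] by blast+
  have fx: "f x \<in> verts ?G" using automorphismD(3)[OF assms(3,4)] .
  have y: "y \<in> verts ?G" using assms(5) layer_subset by blast
  have "f x \<noteq> f y" using automorphismD(2)[OF assms(3)] assms(4,6) y by (meson inj_on_contraD)
  moreover have "?g (f x) = x" "?g (f y) = y"
    using inv_into_f_f[OF automorphismD(2)[OF assms(3)]] assms(4) y by blast+
  ultimately have "?g ` ?L' \<subseteq> ?L"
    using automorphism_layer_subset[OF assms(1) _ automorphism_inv[OF assms(3)] fx assms(9)
        _ assms(8,7)] assms(2,5) nth_mem[OF assms(8)] by simp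
  then have "card ?L' \<le> card ?L"
    using card_image[OF inj(2)] card_mono[OF fin(1)] by metis
  moreover have sub: "f ` ?L \<subseteq> ?L'"
    using automorphism_layer_subset[OF assms(1) _ assms(3-9)] assms(2) nth_mem[OF assms(7)] by blast
  ultimately have "f ` ?L = ?L'"
    using card_image[OF inj(1)] card_seteq[OF fin(2) sub] by simp
  then have "iso (Ts!m) (induced ?G ?L')"
    using iso_trans[OF iso_layer[OF assms(1,4,7)] iso_induced_image[OF assms(3) layer_subset]] by simp
  also have "iso (induced ?G ?L') (Ts!l)" using iso_sym[OF iso_layer[OF assms(1) fx assms(8)]] .
  finally show ?thesis .
qed

lemma not_distinguishing_iff:
  "\<not> distinguishing G c \<longleftrightarrow>
     (\<exists>f v. automorphism G f \<and> (\<forall>w\<in>verts G. c (f w) = c w) \<and> v \<in> verts G \<and> f v \<noteq> v)"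
  unfolding distinguishing_def by blast

lemma dist_threshold_spec:
  assumes "finite (verts G)"
  shows "dist_threshold G \<ge> 1"
    "\<And>c. card (c ` verts G) \<ge> dist_threshold G \<Longrightarrow> distinguishing G c"
proof -
  let ?P = "\<lambda>t. t \<ge> 1 \<and> (\<forall>k\<ge>t. \<forall>c :: 'a \<Rightarrow> nat. card (c ` verts G) = k \<longrightarrow> distinguishing G c)"
  have "?P (card (verts G) + 1)" using card_image_le[OF assms] by (metis Suc_eq_plus1 not_less_eq_eq le_add2)
  then have "?P (dist_threshold G)" unfolding dist_threshold_def by (rule LeastI)
  then show "dist_threshold G \<ge> 1" "\<And>c. card (c ` verts G) \<ge> dist_threshold G \<Longrightarrow> distinguishing G c"
    by blast+
qed

lemma card_colours_lt_dist_threshold: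
  "finite (verts G) \<Longrightarrow> \<not> distinguishing G c \<Longrightarrow> card (c ` verts G) < dist_threshold G"
  using dist_threshold_spec(2) by (meson not_le)

lemma dist_threshold_le:
  assumes "\<And>c. \<not> distinguishing G c \<Longrightarrow> card (c ` verts G) \<le> s"
  shows "dist_threshold G \<le> s + 1"
  unfolding dist_threshold_def by (rule Least_le) (use assms in fastforce)

lemma dist_threshold_attained:
  assumes "finite (verts G)" "dist_threshold G \<ge> 2"
  obtains c where "\<not> distinguishing G c" "card (c ` verts G) = dist_threshold G - 1"
proof -
  let ?P = "\<lambda>t. t \<ge> 1 \<and> (\<forall>k\<ge>t. \<forall>c :: 'a \<Rightarrow> nat. card (c ` verts G) = k \<longrightarrow> distinguishing G c)"
  have "dist_threshold G - 1 < dist_threshold G" using assms(2) by simp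
  then have "\<not> ?P (dist_threshold G - 1)" unfolding dist_threshold_def by (rule not_less_Least)
  then obtain c where "card (c ` verts G) \<ge> dist_threshold G - 1" "\<not> distinguishing G c"
    using assms(2) by auto
  moreover from this(2) have "card (c ` verts G) < dist_threshold G"
    by (rule card_colours_lt_dist_threshold[OF assms(1)])
  ultimately show thesis using that by simp
qed

lemma not_distinguishing_graph_iso:
  assumes "graph_iso G H \<phi>" "\<not> distinguishing G c"
  shows "\<not> distinguishing H (c \<circ> inv_into (verts G) \<phi>)"
    "card ((c \<circ> inv_into (verts G) \<phi>) ` verts H) = card (c ` verts G)"
proof -
  let ?\<psi> = "inv_into (verts G) \<phi>"
  have bij: "bij_betw \<phi> (verts G) (verts H)" using graph_isoD(1)[OF assms(1)] .
  obtain f v where f: "automorphism G f" "\<forall>w\<in>verts G. c (f w) = c w" "v \<in> verts G" "f v \<noteq> v"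
    using assms(2) unfolding not_distinguishing_iff by blast
  have "automorphism H (\<phi> \<circ> f \<circ> ?\<psi>)" using automorphism_conj[OF assms(1) f(1)] .
  moreover have "(c \<circ> ?\<psi>) ((\<phi> \<circ> f \<circ> ?\<psi>) w) = (c \<circ> ?\<psi>) w" if "w \<in> verts H" for w
    using f(2) automorphismD(3)[OF f(1)] bij_betwE[OF bij_betw_inv_into[OF bij]] that
    by (simp add: bij_betw_inv_into_left[OF bij])
  moreover have "(\<phi> \<circ> f \<circ> ?\<psi>) (\<phi> v) \<noteq> \<phi> v"
    using f(3,4) automorphismD(3)[OF f(1)] graph_isoD(2)[OF assms(1)]
    by (simp add: bij_betw_inv_into_left[OF bij] inj_on_eq_iff)
  ultimately show "\<not> distinguishing H (c \<circ> ?\<psi>)"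
    unfolding not_distinguishing_iff using graph_isoD(3)[OF assms(1) f(3)] by blast
  have "?\<psi> ` verts H = verts G" using bij_betw_imp_surj_on[OF bij_betw_inv_into[OF bij]] .
  then show "card ((c \<circ> ?\<psi>) ` verts H) = card (c ` verts G)" by (simp only: image_comp[symmetric])
qed

lemma automorphism_cart_decompose:
  assumes gA: "graph A" and gR: "graph R" and cA: "connected_graph A" and cR: "connected_graph R"
    and aut: "automorphism (cart A R) \<sigma>"
    and fst_pres: "\<And>u v. adj (cart A R) u v \<Longrightarrow> fst u = fst v \<Longrightarrow> fst (\<sigma> u) = fst (\<sigma> v)"
    and snd_pres: "\<And>u v. adj (cart A R) u v \<Longrightarrow> snd u = snd v \<Longrightarrow> snd (\<sigma> u) = snd (\<sigma> v)"
  obtains \<alpha> \<beta> where "automorphism A \<alpha>" "automorphism R \<beta>"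
    "\<And>a r. a \<in> verts A \<Longrightarrow> r \<in> verts R \<Longrightarrow> \<sigma> (a, r) = (\<alpha> a, \<beta> r)"
proof -
  obtain a0 r0 where a0: "a0 \<in> verts A" and r0: "r0 \<in> verts R"
    using cA cR unfolding connected_graph_def by blast
  have adj_fst: "adj (cart A R) (a, r) (a', r) \<longleftrightarrow> adj A a a'" if "r \<in> verts R" for a a' r
    using that graphD(5)[OF gR] by (simp add: adj_cart)
  have adj_snd: "adj (cart A R) (a, r) (a, r') \<longleftrightarrow> adj R r r'" if "a \<in> verts A" for a r r'
    using that graphD(5)[OF gA] by (simp add: adj_cart)
  have fst_const: "fst (\<sigma> (a, r)) = fst (\<sigma> (a, r'))" if "a \<in> verts A" "(adj R)\<^sup>*\<^sup>* r r'" for a r r'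
    using that(2) by induction (auto intro: fst_pres simp: adj_snd[OF that(1)])
  have snd_const: "snd (\<sigma> (a, r)) = snd (\<sigma> (a', r))" if "r \<in> verts R" "(adj A)\<^sup>*\<^sup>* a a'" for a a' r
    using that(2) by induction (auto intro: snd_pres simp: adj_fst[OF that(1)])
  define \<alpha> where "\<alpha> a = fst (\<sigma> (a, r0))" for a
  define \<beta> where "\<beta> r = snd (\<sigma> (a0, r))" for r
  have \<sigma>: "\<sigma> (a, r) = (\<alpha> a, \<beta> r)" if "a \<in> verts A" "r \<in> verts R" for a r
    using fst_const[OF that(1)] snd_const[OF that(2)] cA cR a0 r0 that
    unfolding \<alpha>_def \<beta>_def connected_graph_def by (metis prod.collapse)
  have in_verts: "\<alpha> a \<in> verts A \<and> \<beta> r \<in> verts R" if "a \<in> verts A" "r \<in> verts R" for a r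
    using automorphismD(3)[OF aut] that \<sigma>[OF that] by (force simp: verts_cart)
  have inj: "inj_on \<sigma> (verts A \<times> verts R)" using automorphismD(2)[OF aut] by (simp add: verts_cart)
  have "automorphism A \<alpha>"
    unfolding automorphism_iff_graph_iso
  proof (rule graph_isoI)
    have "inj_on \<alpha> (verts A)" using inj r0 by (auto simp: inj_on_def \<sigma>)
    moreover have "\<alpha> ` verts A \<subseteq> verts A" using in_verts r0 by blast
    ultimately show "bij_betw \<alpha> (verts A) (verts A)"
      using endo_inj_surj[OF graphD(1)[OF gA]] by (simp add: bij_betw_def)
    fix a a' assume "a \<in> verts A" "a' \<in> verts A"
    then show "adj A a a' \<longleftrightarrow> adj A (\<alpha> a) (\<alpha> a')"
      using automorphismD(4)[OF aut, of "(a, r0)" "(a', r0)"] adj_fst r0 in_verts \<sigma>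
      by (simp add: verts_cart)
  qed
  moreover have "automorphism R \<beta>"
    unfolding automorphism_iff_graph_iso
  proof (rule graph_isoI)
    have "inj_on \<beta> (verts R)" using inj a0 by (auto simp: inj_on_def \<sigma>)
    moreover have "\<beta> ` verts R \<subseteq> verts R" using in_verts a0 by blast
    ultimately show "bij_betw \<beta> (verts R) (verts R)"
      using endo_inj_surj[OF graphD(1)[OF gR]] by (simp add: bij_betw_def)
    fix r r' assume "r \<in> verts R" "r' \<in> verts R"
    then show "adj R r r' \<longleftrightarrow> adj R (\<beta> r) (\<beta> r')"
      using automorphismD(4)[OF aut, of "(a0, r)" "(a0, r')"] adj_snd a0 in_verts \<sigma>
      by (simp add: verts_cart)
  qed
  ultimately show thesis using that \<sigma> by blast
qed

definition orbit_of :: "('a \<Rightarrow> 'a) \<Rightarrow> 'a \<Rightarrow> 'a set" where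
  "orbit_of g x = range (\<lambda>n. (g ^^ n) x)"

lemma self_in_orbit_of: "x \<in> orbit_of g x"
  unfolding orbit_of_def by (metis funpow_0 rangeI)

lemma orbit_of_subset: "bij_betw g S S \<Longrightarrow> x \<in> S \<Longrightarrow> orbit_of g x \<subseteq> S"
  unfolding orbit_of_def using bij_betw_funpow bij_betwE by blast

lemma funpow_returns:
  assumes "finite S" "bij_betw g S S" "x \<in> S"
  obtains n where "n > 0" "(g ^^ n) x = x"
proof -
  have "\<not> inj (\<lambda>n. (g ^^ n) x)"
    using finite_subset[OF orbit_of_subset[OF assms(2,3)] assms(1)] finite_imageD
    unfolding orbit_of_def by blast
  then obtain i j where ij: "i < j" "(g ^^ i) x = (g ^^ j) x"
    unfolding inj_def by (metis linorder_neqE_nat)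
  have "(g ^^ i) ((g ^^ (j - i)) x) = (g ^^ (i + (j - i))) x" by (simp only: funpow_add comp_apply)
  then have "(g ^^ i) ((g ^^ (j - i)) x) = (g ^^ i) x" using ij by simp
  then have "(g ^^ (j - i)) x = x"
    using bij_betw_imp_inj_on[OF bij_betw_funpow[OF assms(2)]] bij_betwE[OF bij_betw_funpow[OF assms(2)]]
      assms(3) by (meson inj_onD)
  then show thesis using that[of "j - i"] ij(1) by simp
qed

lemma orbit_of_step:
  assumes "finite S" "bij_betw g S S" "x \<in> S"
  shows "orbit_of g (g x) = orbit_of g x"
proof -
  have shift: "(g ^^ m) (g x) = (g ^^ Suc m) x" for m by (simp only: funpow_Suc_right comp_apply)
  obtain n where n: "n > 0" "(g ^^ n) x = x" using funpow_returns[OF assms] .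
  have "(g ^^ m) x = (g ^^ (m + n - 1)) (g x)" for m
  proof -
    have "(g ^^ (m + n - 1)) (g x) = (g ^^ (m + n)) x" unfolding shift using n(1) by simp
    also have "\<dots> = (g ^^ m) x" using n(2) by (simp only: funpow_add comp_apply)
    finally show ?thesis by simp
  qed
  then show ?thesis unfolding orbit_of_def shift by blast
qed

text \<open>Colouring every vertex by its orbit under a nontrivial automorphism gives a colouring
  that is not distinguishing.\<close>

lemma card_orbits_lt_dist_threshold:
  assumes "graph A" "automorphism A \<alpha>" "a \<in> verts A" "\<alpha> a \<noteq> a"
  shows "card (orbit_of \<alpha> ` verts A) < dist_threshold A"
proof -
  have fin: "finite (verts A)" using graphD(1)[OF assms(1)] .
  have "finite (orbit_of \<alpha> ` verts A)" using fin by simp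
  then obtain h :: "'a set \<Rightarrow> nat" where h: "inj_on h (orbit_of \<alpha> ` verts A)"
    using finite_imp_inj_to_nat_seg by blast
  have "\<forall>w\<in>verts A. (h \<circ> orbit_of \<alpha>) (\<alpha> w) = (h \<circ> orbit_of \<alpha>) w"
    using orbit_of_step[OF fin automorphismD(1)[OF assms(2)]] by simp
  then have "\<not> distinguishing A (h \<circ> orbit_of \<alpha>)"
    unfolding not_distinguishing_iff using assms(2-4) by blast
  then have "card ((h \<circ> orbit_of \<alpha>) ` verts A) < dist_threshold A"
    by (rule card_colours_lt_dist_threshold[OF fin])
  then show ?thesis unfolding image_comp[symmetric] card_image[OF h] .
qed

text \<open>A colouring invariant under a product automorphism whose first component moves a vertex
  is determined by the orbit of the first coordinate together with one further vertex of R.\<close>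

lemma card_colours_cart_le:
  assumes gA: "graph A" and gR: "graph R" and aA: "automorphism A \<alpha>" and aR: "automorphism R \<beta>"
    and a0: "a0 \<in> verts A" "\<alpha> a0 \<noteq> a0"
    and inv: "\<And>a r. a \<in> verts A \<Longrightarrow> r \<in> verts R \<Longrightarrow> c (\<alpha> a, \<beta> r) = c (a, r)"
  shows "card (c ` verts (cart A R)) \<le> (dist_threshold A - 1) * card (verts R)"
proof -
  let ?O = "orbit_of \<alpha> ` verts A"
  have finA: "finite (verts A)" and finR: "finite (verts R)" using graphD(1)[OF gA] graphD(1)[OF gR] .
  have bA: "bij_betw \<alpha> (verts A) (verts A)" and bR: "bij_betw \<beta> (verts R) (verts R)"
    using automorphismD(1)[OF aA] automorphismD(1)[OF aR] .
  have iter: "c ((\<alpha> ^^ n) a, (\<beta> ^^ n) r) = c (a, r)" if "a \<in> verts A" "r \<in> verts R" for n a r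
  proof (induction n)
    case (Suc n)
    have "(\<alpha> ^^ n) a \<in> verts A" "(\<beta> ^^ n) r \<in> verts R"
      using bij_betwE[OF bij_betw_funpow[OF bA]] bij_betwE[OF bij_betw_funpow[OF bR]] that by blast+
    then show ?case using inv Suc.IH by simp
  qed simp
  have orbit_colours: "card (c ` (orbit_of \<alpha> a \<times> verts R)) \<le> card (verts R)"
    if a: "a \<in> verts A" for a
  proof -
    have "c ` (orbit_of \<alpha> a \<times> verts R) \<subseteq> (\<lambda>r. c (a, r)) ` verts R"
    proof
      fix z assume "z \<in> c ` (orbit_of \<alpha> a \<times> verts R)"
      then obtain n r where r: "r \<in> verts R" and z: "z = c ((\<alpha> ^^ n) a, r)"
        unfolding orbit_of_def by blast
      obtain r' where "r' \<in> verts R" "r = (\<beta> ^^ n) r'"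
        using bij_betw_imp_surj_on[OF bij_betw_funpow[OF bR, of n]] r by blast
      then show "z \<in> (\<lambda>r. c (a, r)) ` verts R" using iter[OF a] z by simp
    qed
    then have "card (c ` (orbit_of \<alpha> a \<times> verts R)) \<le> card ((\<lambda>r. c (a, r)) ` verts R)"
      by (rule card_mono[OF finite_imageI[OF finR]])
    also have "\<dots> \<le> card (verts R)" by (rule card_image_le[OF finR])
    finally show ?thesis .
  qed
  have "c ` verts (cart A R) = (\<Union>B\<in>?O. c ` (B \<times> verts R))"
  proof
    show "c ` verts (cart A R) \<subseteq> (\<Union>B\<in>?O. c ` (B \<times> verts R))"
      unfolding verts_cart using self_in_orbit_of by fast
    show "(\<Union>B\<in>?O. c ` (B \<times> verts R)) \<subseteq> c ` verts (cart A R)"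
      unfolding verts_cart using orbit_of_subset[OF bA] by fast
  qed
  also have "card \<dots> \<le> (\<Sum>B\<in>?O. card (c ` (B \<times> verts R)))"
    by (rule card_UN_le) (use finA in simp)
  also have "\<dots> \<le> card ?O * card (verts R)"
  proof -
    have "card (c ` (B \<times> verts R)) \<le> card (verts R)" if "B \<in> ?O" for B
    proof -
      from that obtain a where "a \<in> verts A" "B = orbit_of \<alpha> a" by blast
      then show ?thesis using orbit_colours by simp
    qed
    from sum_bounded_above[OF this] show ?thesis by simp
  qed
  also have "\<dots> \<le> (dist_threshold A - 1) * card (verts R)"
    using card_orbits_lt_dist_threshold[OF gA aA a0] by (intro mult_right_mono) simp_all
  finally show ?thesis .
qed

lemma cart_colouring_attains:
  assumes gA: "graph A" and gR: "graph R" and ne: "verts R \<noteq> {}" and t2: "dist_threshold A \<ge> 2"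
  obtains c where "\<not> distinguishing (cart A R) c"
    "card (c ` verts (cart A R)) = (dist_threshold A - 1) * card (verts R)"
proof -
  have finA: "finite (verts A)" and finR: "finite (verts R)" using graphD(1) gA gR by blast+
  obtain cA where cA: "\<not> distinguishing A cA" "card (cA ` verts A) = dist_threshold A - 1"
    using dist_threshold_attained[OF finA t2] .
  obtain \<alpha> a1 where \<alpha>: "automorphism A \<alpha>" "\<forall>w\<in>verts A. cA (\<alpha> w) = cA w" "a1 \<in> verts A" "\<alpha> a1 \<noteq> a1"
    using cA(1) unfolding not_distinguishing_iff by blast
  obtain h :: "_ \<Rightarrow> nat" where h: "inj_on h (verts R)"
    using finite_imp_inj_to_nat_seg[OF finR] by blast
  obtain r1 where r1: "r1 \<in> verts R" using ne by blast
  define c where "c = prod_encode \<circ> map_prod cA h"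
  have "automorphism (cart A R) (map_prod \<alpha> id)"
    unfolding automorphism_iff_graph_iso
  proof (rule graph_isoI)
    show "bij_betw (map_prod \<alpha> id) (verts (cart A R)) (verts (cart A R))"
      unfolding verts_cart by (rule bij_betw_map_prod[OF automorphismD(1)[OF \<alpha>(1)] bij_betw_id])
    fix u v assume "u \<in> verts (cart A R)" "v \<in> verts (cart A R)"
    then show "adj (cart A R) u v \<longleftrightarrow> adj (cart A R) (map_prod \<alpha> id u) (map_prod \<alpha> id v)"
      using automorphismD(2-4)[OF \<alpha>(1)]
      by (cases u, cases v) (auto simp: verts_cart adj_cart inj_on_eq_iff)
  qed
  moreover have "c (map_prod \<alpha> id w) = c w" if "w \<in> verts (cart A R)" for w
    using that \<alpha>(2) by (cases w) (simp add: c_def verts_cart)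
  moreover have "(a1, r1) \<in> verts (cart A R)" "map_prod \<alpha> id (a1, r1) \<noteq> (a1, r1)"
    using \<alpha>(3,4) r1 by (simp_all add: verts_cart)
  ultimately have "\<not> distinguishing (cart A R) c" unfolding not_distinguishing_iff by blast
  moreover have "card (c ` verts (cart A R)) = card (cA ` verts A \<times> h ` verts R)"
    unfolding c_def image_comp[symmetric] verts_cart map_prod_surj_on[OF refl refl]
    by (rule card_image[OF inj_prod_encode])
  then have "card (c ` verts (cart A R)) = (dist_threshold A - 1) * card (verts R)"
    using cA(2) card_image[OF h] by (simp add: card_cartesian_product)
  ultimately show thesis using that by blast
qed

lemma ex_less_add_iff: "(\<exists>j<m + (n::nat). P j) \<longleftrightarrow> (\<exists>j<m. P j) \<or> (\<exists>j<n. P (m + j))"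
proof
  assume "\<exists>j<m + n. P j"
  then obtain j where j: "j < m + n" "P j" by blast
  show "(\<exists>j<m. P j) \<or> (\<exists>j<n. P (m + j))"
  proof (cases "j < m")
    case False
    then have "j - m < n" "P (m + (j - m))" using j by simp_all
    then show ?thesis by blast
  qed (use j in blast)
next
  assume "(\<exists>j<m. P j) \<or> (\<exists>j<n. P (m + j))"
  then show "\<exists>j<m + n. P j"
  proof
    assume "\<exists>j<m. P j"
    then show ?thesis by (meson trans_less_add1)
  next
    assume "\<exists>j<n. P (m + j)"
    then show ?thesis by (meson add_less_cancel_left)
  qed
qed

lemma all_less_add_iff: "(\<forall>j<m + (n::nat). P j) \<longleftrightarrow> (\<forall>j<m. P j) \<and> (\<forall>j<n. P (m + j))"
  using ex_less_add_iff[of m n "\<lambda>j. \<not> P j"] by blast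

lemma append_in_verts_cartprod:
  assumes "length p = length Xs"
  shows "p @ q \<in> verts (cartprod (Xs @ Ys)) \<longleftrightarrow> p \<in> verts (cartprod Xs) \<and> q \<in> verts (cartprod Ys)"
  using assms unfolding verts_cartprod by (auto simp: all_less_add_iff nth_append)

lemma adj_cartprod_append:
  assumes "length p = length Xs" "length p' = length Xs"
  shows "adj (cartprod (Xs @ Ys)) (p @ q) (p' @ q') \<longleftrightarrow>
    (p = p' \<and> p \<in> verts (cartprod Xs) \<and> adj (cartprod Ys) q q') \<or>
    (adj (cartprod Xs) p p' \<and> q = q' \<and> q \<in> verts (cartprod Ys))"
proof -
  have eq_iff: "u = u' \<longleftrightarrow> (\<forall>l<length Zs. u!l = u'!l)" if "length u = length Zs" "length u' = length Zs"
    for u u' :: "'a list" and Zs :: "'a graph list"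
    using that by (simp add: list_eq_iff_nth_eq)
  show ?thesis
    unfolding adj_cartprod append_in_verts_cartprod[OF assms(1)] append_in_verts_cartprod[OF assms(2)]
    using assms eq_iff[of p Xs p'] eq_iff[of q Ys q'] length_cartprod_vert[of q Ys] length_cartprod_vert[of q' Ys]
    by (auto simp: ex_less_add_iff all_less_add_iff nth_append)
qed

definition block_split :: "nat \<Rightarrow> nat \<Rightarrow> 'a list \<Rightarrow> 'a list \<times> 'a list" where
  "block_split i n z = (take n (drop i z), take i z @ drop (i + n) z)"

lemma block_split_append: "length p = i \<Longrightarrow> length b = n \<Longrightarrow> block_split i n (p @ b @ q) = (b, p @ q)"
  unfolding block_split_def by simp

lemma cartprod_append_vertE:
  assumes "z \<in> verts (cartprod (Xs @ Ys))"
  obtains p q where "z = p @ q" "p \<in> verts (cartprod Xs)" "q \<in> verts (cartprod Ys)"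
proof -
  have "length (take (length Xs) z) = length Xs" using length_cartprod_vert[OF assms] by simp
  with assms have "take (length Xs) z \<in> verts (cartprod Xs)" "drop (length Xs) z \<in> verts (cartprod Ys)"
    using append_in_verts_cartprod[of "take (length Xs) z" Xs "drop (length Xs) z" Ys] by simp_all
  then show thesis using that[of "take (length Xs) z" "drop (length Xs) z"] by simp
qed

lemma cartprod_append3_vertE:
  assumes "z \<in> verts (cartprod (P @ B @ Q))"
  obtains p b q where "z = p @ b @ q" "p \<in> verts (cartprod P)" "b \<in> verts (cartprod B)"
    "q \<in> verts (cartprod Q)"
  using assms by (metis cartprod_append_vertE)

lemma append3_in_verts_cartprod:
  assumes "length p = length P" "length b = length B"
  shows "p @ b @ q \<in> verts (cartprod (P @ B @ Q)) \<longleftrightarrow>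
     p \<in> verts (cartprod P) \<and> b \<in> verts (cartprod B) \<and> q \<in> verts (cartprod Q)"
  using append_in_verts_cartprod[OF assms(1), of "b @ q" "B @ Q"] append_in_verts_cartprod[OF assms(2)]
  by simp

lemma graph_iso_block_split:
  "graph_iso (cartprod (P @ B @ Q)) (cart (cartprod B) (cartprod (P @ Q)))
     (block_split (length P) (length B))"
proof (rule graph_isoI)
  let ?G = "cartprod (P @ B @ Q)" and ?C = "cart (cartprod B) (cartprod (P @ Q))"
  let ?\<phi> = "block_split (length P) (length B)"
    and ?\<psi> = "\<lambda>(b, r). take (length P) r @ b @ drop (length P) r"
  have "\<forall>z\<in>verts ?G. ?\<psi> (?\<phi> z) = z \<and> ?\<phi> z \<in> verts ?C"
  proof
    fix z assume "z \<in> verts ?G"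
    then obtain p b q where z: "z = p @ b @ q" "p \<in> verts (cartprod P)" "b \<in> verts (cartprod B)"
      "q \<in> verts (cartprod Q)" by (rule cartprod_append3_vertE)
    then have "length p = length P" "length b = length B" using length_cartprod_vert by blast+
    then show "?\<psi> (?\<phi> z) = z \<and> ?\<phi> z \<in> verts ?C"
      using z append_in_verts_cartprod[of p P q Q] by (simp add: block_split_append verts_cart)
  qed
  moreover have "\<forall>y\<in>verts ?C. ?\<phi> (?\<psi> y) = y \<and> ?\<psi> y \<in> verts ?G"
  proof
    fix y assume "y \<in> verts ?C"
    then obtain b p q where y: "y = (b, p @ q)" "b \<in> verts (cartprod B)" "p \<in> verts (cartprod P)"
      "q \<in> verts (cartprod Q)" unfolding verts_cart by (metis SigmaE cartprod_append_vertE)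
    then have "length p = length P" "length b = length B" using length_cartprod_vert by blast+
    then show "?\<phi> (?\<psi> y) = y \<and> ?\<psi> y \<in> verts ?G"
      using y append3_in_verts_cartprod[of p P b B q Q] by (simp add: block_split_append)
  qed
  ultimately show "bij_betw ?\<phi> (verts ?G) (verts ?C)"
    by (intro bij_betw_byWitness[where f' = ?\<psi>]) auto
  fix z z' assume "z \<in> verts ?G" "z' \<in> verts ?G"
  then obtain p b q p' b' q' where z: "z = p @ b @ q" "z' = p' @ b' @ q'"
    and len: "length p = length P" "length b = length B" "length p' = length P" "length b' = length B"
    by (metis cartprod_append3_vertE length_cartprod_vert)
  have "b @ q = b' @ q' \<longleftrightarrow> b = b' \<and> q = q'" "p @ q = p' @ q' \<longleftrightarrow> p = p' \<and> q = q'"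
    using len by simp_all
  then show "adj ?G z z' \<longleftrightarrow> adj ?C (?\<phi> z) (?\<phi> z')"
    unfolding z block_split_append[OF len(1,2)] block_split_append[OF len(3,4)] adj_cart
      adj_cartprod_append[OF len(1,3)] adj_cartprod_append[OF len(2,4)] adj_cartprod_append[OF len(1,3), of Q]
      append_in_verts_cartprod[OF len(1)] append_in_verts_cartprod[OF len(2)]
    by blast
qed

lemma block_split_update_inside:
  "i \<le> j \<Longrightarrow> j < i + n \<Longrightarrow> snd (block_split i n (x[j := a])) = snd (block_split i n x)"
  by (simp add: block_split_def)

lemma block_split_update_outside:
  "j < i \<or> i + n \<le> j \<Longrightarrow> fst (block_split i n (x[j := a])) = fst (block_split i n x)"
  by (auto simp: block_split_def drop_update_swap)

lemma layer_eq_update: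
  assumes "y \<in> layer Ts j x" "x \<in> verts (cartprod Ts)" "j < length Ts"
  shows "y = x[j := y!j]"
  using assms length_cartprod_vert[OF assms(2)] unfolding layer_def
  by (auto intro!: nth_equalityI simp: length_cartprod_vert nth_list_update)

lemma adj_cartprod_layer:
  assumes "graph (cartprod Ts)" "adj (cartprod Ts) x y"
  obtains j where "j < length Ts" "y \<in> layer Ts j x" "x \<noteq> y"
proof -
  obtain j where "j < length Ts" "y \<in> verts (cartprod Ts)" "\<forall>l<length Ts. l \<noteq> j \<longrightarrow> x!l = y!l"
    using assms(2) unfolding adj_cartprod by blast
  moreover have "x \<noteq> y" using assms(2) graphD(5)[OF assms(1)] by blast
  ultimately show thesis using that unfolding layer_def by auto
qed

lemma nth_append3_in_set:
  assumes "j < length (P @ B @ Q)"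
  shows "length P \<le> j \<and> j < length P + length B \<Longrightarrow> (P @ B @ Q)!j \<in> set B"
    and "\<not> (length P \<le> j \<and> j < length P + length B) \<Longrightarrow> (P @ B @ Q)!j \<in> set (P @ Q)"
  using assms by (auto simp: nth_append)

lemma block_split_layer:
  fixes P B Q :: "'a graph list"
  defines "\<phi> \<equiv> block_split (length P) (length B)"
  assumes u: "u \<in> verts (cartprod (P @ B @ Q))" and w: "w \<in> layer (P @ B @ Q) k u" "u \<noteq> w"
    and k: "k < length (P @ B @ Q)"
  shows "snd (\<phi> u) = snd (\<phi> w) \<longleftrightarrow> length P \<le> k \<and> k < length P + length B"
    and "fst (\<phi> u) = fst (\<phi> w) \<longleftrightarrow> \<not> (length P \<le> k \<and> k < length P + length B)"
proof -
  have upd: "w = u[k := w!k]" using layer_eq_update[OF w(1) u k] .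
  have "w \<in> verts (cartprod (P @ B @ Q))" using w(1) layer_subset by blast
  then have "\<phi> u \<noteq> \<phi> w"
    using graph_isoD(2)[OF graph_iso_block_split] u w(2) unfolding \<phi>_def inj_on_def by blast
  then show "snd (\<phi> u) = snd (\<phi> w) \<longleftrightarrow> length P \<le> k \<and> k < length P + length B"
    "fst (\<phi> u) = fst (\<phi> w) \<longleftrightarrow> \<not> (length P \<le> k \<and> k < length P + length B)"
    using block_split_update_inside[of "length P" k "length B" u "w!k"]
      block_split_update_outside[of k "length P" "length B" u "w!k"]
    unfolding \<phi>_def by (metis not_le prod_eqI upd)+
qed

text \<open>Automorphisms map edges to edges of isomorphic factors, so they respect a block of factors
  that are isomorphic to none outside it.\<close>

lemma automorphism_block_split_edge:
  fixes P B Q :: "'a graph list"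
  defines "Ts \<equiv> P @ B @ Q" and "\<phi> \<equiv> block_split (length P) (length B)"
  assumes conn: "connected_graphs Ts" and prime: "\<forall>H\<in>set Ts. prime_graph H"
    and sep: "\<forall>H\<in>set B. \<forall>K\<in>set (P @ Q). \<not> iso H K"
    and aut: "automorphism (cartprod Ts) f" and xy: "adj (cartprod Ts) x y"
  shows "fst (\<phi> x) = fst (\<phi> y) \<Longrightarrow> fst (\<phi> (f x)) = fst (\<phi> (f y))"
    and "snd (\<phi> x) = snd (\<phi> y) \<Longrightarrow> snd (\<phi> (f x)) = snd (\<phi> (f y))"
proof -
  let ?inB = "\<lambda>k. length P \<le> k \<and> k < length P + length B"
  have gG: "graph (cartprod Ts)" using connected_graph_cartprod(1)[OF conn] .
  have x: "x \<in> verts (cartprod Ts)" using graphD(2)[OF gG xy] .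
  have fxy: "adj (cartprod Ts) (f x) (f y)"
    using automorphismD(4)[OF aut] x graphD(3)[OF gG xy] xy by blast
  obtain j where j: "j < length Ts" "y \<in> layer Ts j x" "x \<noteq> y"
    using adj_cartprod_layer[OF gG xy] .
  obtain l where l: "l < length Ts" "f y \<in> layer Ts l (f x)" "f x \<noteq> f y"
    using adj_cartprod_layer[OF gG fxy] .
  have "iso (Ts!j) (Ts!l)"
    using iso_automorphism_layer_factors[OF conn prime aut x j(2,3,1) l(1,2)] .
  then have jl: "?inB j \<longleftrightarrow> ?inB l"
    using sep nth_append3_in_set j(1) l(1) iso_sym unfolding Ts_def by metis
  note split_x = block_split_layer[OF x[unfolded Ts_def] j(2,3)[unfolded Ts_def] j(1)[unfolded Ts_def]]
  note split_fx = block_split_layer[OF automorphismD(3)[OF aut x, unfolded Ts_def]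
      l(2,3)[unfolded Ts_def] l(1)[unfolded Ts_def]]
  show "fst (\<phi> x) = fst (\<phi> y) \<Longrightarrow> fst (\<phi> (f x)) = fst (\<phi> (f y))"
    using split_x(2) split_fx(2) jl unfolding \<phi>_def by blast
  show "snd (\<phi> x) = snd (\<phi> y) \<Longrightarrow> snd (\<phi> (f x)) = snd (\<phi> (f y))"
    using split_x(1) split_fx(1) jl unfolding \<phi>_def by blast
qed

lemma card_verts_cartprod_block:
  "card (verts (cartprod (P @ B @ Q))) = card (verts (cartprod B)) * card (verts (cartprod (P @ Q)))"
  using bij_betw_same_card[OF graph_isoD(1)[OF graph_iso_block_split]]
  by (simp add: verts_cart card_cartesian_product)

text \<open>Conjugated by the block splitting, the automorphism becomes a product automorphism of
  cartprod B times cartprod (P @ Q), and the two-factor bound applies.\<close>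

lemma card_colours_block_le:
  fixes P B Q :: "'a graph list"
  defines "Ts \<equiv> P @ B @ Q" and "\<phi> \<equiv> block_split (length P) (length B)"
  assumes conn: "connected_graphs Ts" and prime: "\<forall>H\<in>set Ts. prime_graph H"
    and sep: "\<forall>H\<in>set B. \<forall>K\<in>set (P @ Q). \<not> iso H K"
    and aut: "automorphism (cartprod Ts) f" and inv: "\<forall>w\<in>verts (cartprod Ts). c (f w) = c w"
    and v: "v \<in> verts (cartprod Ts)" and moved: "fst (\<phi> (f v)) \<noteq> fst (\<phi> v)"
  shows "card (c ` verts (cartprod Ts)) \<le> (dist_threshold (cartprod B) - 1) * card (verts (cartprod (P @ Q)))"
proof -
  let ?G = "cartprod Ts" and ?A = "cartprod B" and ?R = "cartprod (P @ Q)"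
  let ?C = "cart ?A ?R" and ?\<psi> = "inv_into (verts ?G) \<phi>"
  have iso: "graph_iso ?G ?C \<phi>" using graph_iso_block_split unfolding Ts_def \<phi>_def .
  have iso': "graph_iso ?C ?G ?\<psi>" using graph_iso_inv[OF iso] .
  have \<psi>\<phi>: "?\<psi> (\<phi> z) = z" if "z \<in> verts ?G" for z
    using inv_into_f_f[OF graph_isoD(2)[OF iso] that] .
  have \<phi>\<psi>: "\<phi> (?\<psi> y) = y" if "y \<in> verts ?C" for y
    using bij_betw_inv_into_right[OF graph_isoD(1)[OF iso] that] .
  have connAR: "connected_graphs B" "connected_graphs (P @ Q)" using conn unfolding Ts_def by simp_all
  define \<sigma> where "\<sigma> = \<phi> \<circ> f \<circ> ?\<psi>"
  have aut\<sigma>: "automorphism ?C \<sigma>" unfolding \<sigma>_def using automorphism_conj[OF iso aut] .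
  have edge: "adj ?G (?\<psi> u) (?\<psi> w)" "\<phi> (?\<psi> u) = u" "\<phi> (?\<psi> w) = w" if "adj ?C u w" for u w
    using graph_isoD(4)[OF iso'] graphD(2,3)[OF graph_cart[OF connected_graph_cartprod(1)[OF connAR(1)]
        connected_graph_cartprod(1)[OF connAR(2)]] that] that \<phi>\<psi> by auto
  obtain \<alpha> \<beta> where \<alpha>\<beta>: "automorphism ?A \<alpha>" "automorphism ?R \<beta>"
    "\<And>a r. a \<in> verts ?A \<Longrightarrow> r \<in> verts ?R \<Longrightarrow> \<sigma> (a, r) = (\<alpha> a, \<beta> r)"
  proof (rule automorphism_cart_decompose[OF connected_graph_cartprod(1)[OF connAR(1)]
        connected_graph_cartprod(1)[OF connAR(2)] connected_graph_cartprod(2)[OF connAR(1)]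
        connected_graph_cartprod(2)[OF connAR(2)] aut\<sigma>])
    fix u w assume "adj ?C u w"
    note block = automorphism_block_split_edge[OF conn[unfolded Ts_def] prime[unfolded Ts_def] sep
        aut[unfolded Ts_def] edge(1)[OF this, unfolded Ts_def]]
    show "fst u = fst w \<Longrightarrow> fst (\<sigma> u) = fst (\<sigma> w)"
      using block(1) edge(2,3)[OF \<open>adj ?C u w\<close>] unfolding \<sigma>_def \<phi>_def Ts_def by simp
    show "snd u = snd w \<Longrightarrow> snd (\<sigma> u) = snd (\<sigma> w)"
      using block(2) edge(2,3)[OF \<open>adj ?C u w\<close>] unfolding \<sigma>_def \<phi>_def Ts_def by simp
  qed blast
  obtain a r where ar: "\<phi> v = (a, r)" by fastforce
  have arv: "a \<in> verts ?A" "r \<in> verts ?R"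
    using graph_isoD(3)[OF iso v] ar by (auto simp: verts_cart)
  have "(\<alpha> a, \<beta> r) = \<phi> (f v)" using \<alpha>\<beta>(3)[OF arv] \<psi>\<phi>[OF v] ar unfolding \<sigma>_def by (metis comp_apply)
  then have "\<alpha> a \<noteq> a" using moved ar by (metis fst_conv)
  moreover have "(c \<circ> ?\<psi>) (\<alpha> a', \<beta> r') = (c \<circ> ?\<psi>) (a', r')"
    if "a' \<in> verts ?A" "r' \<in> verts ?R" for a' r'
  proof -
    have y: "?\<psi> (a', r') \<in> verts ?G" using graph_isoD(3)[OF iso'] that by (simp add: verts_cart)
    have "(c \<circ> ?\<psi>) (\<alpha> a', \<beta> r') = c (?\<psi> (\<phi> (f (?\<psi> (a', r')))))"
      using \<alpha>\<beta>(3)[OF that] unfolding \<sigma>_def by simp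
    also have "\<dots> = c (?\<psi> (a', r'))" using \<psi>\<phi> automorphismD(3)[OF aut y] inv y by simp
    finally show ?thesis by simp
  qed
  ultimately have "card ((c \<circ> ?\<psi>) ` verts ?C) \<le> (dist_threshold ?A - 1) * card (verts ?R)"
    using card_colours_cart_le[OF connected_graph_cartprod(1)[OF connAR(1)]
        connected_graph_cartprod(1)[OF connAR(2)] \<alpha>\<beta>(1,2) arv(1)] by blast
  moreover have "?\<psi> ` verts ?C = verts ?G"
    using bij_betw_imp_surj_on[OF graph_isoD(1)[OF iso']] .
  ultimately show ?thesis by (simp only: image_comp[symmetric])
qed

lemma block_colouring_attains:
  assumes "connected_graphs (P @ B @ Q)" "dist_threshold (cartprod B) \<ge> 2"
  obtains c where "\<not> distinguishing (cartprod (P @ B @ Q)) c"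
    "card (c ` verts (cartprod (P @ B @ Q))) =
       (dist_threshold (cartprod B) - 1) * card (verts (cartprod (P @ Q)))"
proof -
  have conn: "connected_graphs B" "connected_graphs (P @ Q)" using assms(1) by simp_all
  obtain c where c: "\<not> distinguishing (cart (cartprod B) (cartprod (P @ Q))) c"
    "card (c ` verts (cart (cartprod B) (cartprod (P @ Q)))) =
       (dist_threshold (cartprod B) - 1) * card (verts (cartprod (P @ Q)))"
    using cart_colouring_attains[OF connected_graph_cartprod(1)[OF conn(1)]
        connected_graph_cartprod(1)[OF conn(2)] cartprod_nonempty[OF conn(2)] assms(2)] .
  note iso = graph_iso_inv[OF graph_iso_block_split[of P B Q]]
  show thesis
    using that not_distinguishing_graph_iso[OF iso c(1)] c(2) by simp
qed

lemma concat_take_nth_drop: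
  "i < length Fs \<Longrightarrow> concat Fs = concat (take i Fs) @ Fs!i @ concat (drop (Suc i) Fs)"
  by (subst id_take_nth_drop[of i Fs]) simp_all

lemma concat_block_index:
  assumes "j < length (concat Fs)"
  obtains i where "i < length Fs" "length (concat (take i Fs)) \<le> j"
    "j < length (concat (take i Fs)) + length (Fs!i)"
  using assms
proof (induction Fs arbitrary: j thesis)
  case (Cons B Fs)
  show ?case
  proof (cases "j < length B")
    case True
    then show ?thesis using Cons.prems(1)[of 0] by simp
  next
    case False
    then have "j - length B < length (concat Fs)" using Cons.prems(2) by simp
    then obtain i where "i < length Fs" "length (concat (take i Fs)) \<le> j - length B"
      "j - length B < length (concat (take i Fs)) + length (Fs!i)"
      using Cons.IH by blast
    then show ?thesis using Cons.prems(1)[of "Suc i"] False by simp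
  qed
qed simp

lemma in_set_other_blocks:
  assumes "K \<in> set (concat (take i Fs) @ concat (drop (Suc i) Fs))"
  obtains j where "j < length Fs" "j \<noteq> i" "K \<in> set (Fs!j)"
proof -
  from assms consider (take) xs where "xs \<in> set (take i Fs)" "K \<in> set xs"
    | (drop) xs where "xs \<in> set (drop (Suc i) Fs)" "K \<in> set xs"
    by auto
  then show thesis
  proof cases
    case take
    obtain j where "j < length (take i Fs)" "take i Fs ! j = xs"
      using take(1) unfolding in_set_conv_nth by blast
    then show thesis using that[of j] take(2) by simp
  next
    case drop
    obtain j where "j < length (drop (Suc i) Fs)" "drop (Suc i) Fs ! j = xs"
      using drop(1) unfolding in_set_conv_nth by blast
    then show thesis using that[of "Suc i + j"] drop(2) by simp
  qed
qed

locale prime_factor_blocks =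
  fixes Fs :: "'a graph list list"
  assumes connected: "connected_graphs (concat Fs)"
    and prime: "\<forall>H\<in>set (concat Fs). prime_graph H"
    and separated: "\<And>i j. i < length Fs \<Longrightarrow> j < length Fs \<Longrightarrow> i \<noteq> j \<Longrightarrow>
      \<forall>H\<in>set (Fs!i). \<forall>K\<in>set (Fs!j). \<not> iso H K"
begin

abbreviation others :: "nat \<Rightarrow> 'a graph list" where
  "others i \<equiv> concat (take i Fs) @ concat (drop (Suc i) Fs)"

lemma others_separated:
  assumes "i < length Fs"
  shows "\<forall>H\<in>set (Fs!i). \<forall>K\<in>set (others i). \<not> iso H K"
proof (intro ballI)
  fix H K assume "H \<in> set (Fs!i)" "K \<in> set (others i)"
  moreover obtain j where "j < length Fs" "j \<noteq> i" "K \<in> set (Fs!j)"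
    using in_set_other_blocks[OF \<open>K \<in> set (others i)\<close>] .
  ultimately show "\<not> iso H K" using separated[OF assms] by blast
qed

lemma card_colours_le_block:
  assumes "\<not> distinguishing (cartprod (concat Fs)) c"
  obtains i where "i < length Fs" "card (c ` verts (cartprod (concat Fs)))
    \<le> (dist_threshold (cartprod (Fs!i)) - 1) * card (verts (cartprod (others i)))"
proof -
  let ?G = "cartprod (concat Fs)"
  obtain f v where f: "automorphism ?G f" "\<forall>w\<in>verts ?G. c (f w) = c w" "v \<in> verts ?G" "f v \<noteq> v"
    using assms unfolding not_distinguishing_iff by blast
  have len: "length (f v) = length (concat Fs)" "length v = length (concat Fs)"
    using length_cartprod_vert automorphismD(3)[OF f(1,3)] f(3) by blast+
  then obtain j where j: "j < length (concat Fs)" "f v!j \<noteq> v!j"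
    using f(4) nth_equalityI by metis
  obtain i where i: "i < length Fs" "length (concat (take i Fs)) \<le> j"
    "j < length (concat (take i Fs)) + length (Fs!i)"
    using concat_block_index[OF j(1)] .
  let ?P = "concat (take i Fs)" and ?B = "Fs!i" and ?Q = "concat (drop (Suc i) Fs)"
  have Ts: "concat Fs = ?P @ ?B @ ?Q" using concat_take_nth_drop[OF i(1)] .
  have "fst (block_split (length ?P) (length ?B) (f v)) ! (j - length ?P)
      \<noteq> fst (block_split (length ?P) (length ?B) v) ! (j - length ?P)"
    using i j len by (simp add: block_split_def)
  then have "card (c ` verts (cartprod (?P @ ?B @ ?Q)))
      \<le> (dist_threshold (cartprod ?B) - 1) * card (verts (cartprod (others i)))"
    using card_colours_block_le[of ?P ?B ?Q] connected prime others_separated[OF i(1)] f(1-3)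
    unfolding Ts[symmetric] by metis
  then show thesis using that i(1) Ts by simp
qed

lemma block_value_lt_dist_threshold:
  assumes "i < length Fs"
  shows "(dist_threshold (cartprod (Fs!i)) - 1) * card (verts (cartprod (others i)))
    < dist_threshold (cartprod (concat Fs))"
proof (cases "dist_threshold (cartprod (Fs!i)) \<ge> 2")
  case True
  have Ts: "concat Fs = concat (take i Fs) @ Fs!i @ concat (drop (Suc i) Fs)"
    using concat_take_nth_drop[OF assms] .
  obtain c where "\<not> distinguishing (cartprod (concat Fs)) c"
    "card (c ` verts (cartprod (concat Fs))) = (dist_threshold (cartprod (Fs!i)) - 1)
       * card (verts (cartprod (others i)))"
    using block_colouring_attains[of "concat (take i Fs)" "Fs!i" "concat (drop (Suc i) Fs)"]
      connected True unfolding Ts[symmetric] by metis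
  then show ?thesis
    using card_colours_lt_dist_threshold graphD(1)[OF connected_graph_cartprod(1)[OF connected]] by metis
next
  case False
  then show ?thesis
    using dist_threshold_spec(1)[OF graphD(1)[OF connected_graph_cartprod(1)[OF connected]]] by simp
qed

theorem dist_threshold_cartprod_concat:
  assumes "Fs \<noteq> []"
  shows "dist_threshold (cartprod (concat Fs)) =
    Max ((\<lambda>i. (dist_threshold (cartprod (Fs!i)) - 1)
       * (card (verts (cartprod (concat Fs))) div card (verts (cartprod (Fs!i))))) ` {..<length Fs}) + 1"
proof -
  let ?G = "cartprod (concat Fs)"
  let ?val = "\<lambda>i. (dist_threshold (cartprod (Fs!i)) - 1) * card (verts (cartprod (others i)))"
  have "card (verts ?G) div card (verts (cartprod (Fs!i))) = card (verts (cartprod (others i)))"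
    if i: "i < length Fs" for i
  proof -
    have "connected_graphs (Fs!i)" using connected nth_mem[OF i] by (simp add: connected_graphs_def)
    then have "card (verts (cartprod (Fs!i))) > 0"
      using cartprod_nonempty graphD(1)[OF connected_graph_cartprod(1)] card_gt_0_iff by blast
    then show ?thesis
      using card_verts_cartprod_block[of "concat (take i Fs)" "Fs!i" "concat (drop (Suc i) Fs)"]
      by (simp add: concat_take_nth_drop[OF i, symmetric])
  qed
  then have M: "Max ((\<lambda>i. (dist_threshold (cartprod (Fs!i)) - 1)
       * (card (verts ?G) div card (verts (cartprod (Fs!i))))) ` {..<length Fs}) = Max (?val ` {..<length Fs})"
    by (intro arg_cong[where f = Max] image_cong) simp_all
  have "0 \<in> {..<length Fs}" using assms by simp
  then have fin: "finite (?val ` {..<length Fs})" "?val ` {..<length Fs} \<noteq> {}" by blast+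
  have "dist_threshold ?G \<le> Max (?val ` {..<length Fs}) + 1"
  proof (rule dist_threshold_le)
    fix c assume "\<not> distinguishing ?G c"
    then obtain i where "i < length Fs" "card (c ` verts ?G) \<le> ?val i"
      by (rule card_colours_le_block)
    then show "card (c ` verts ?G) \<le> Max (?val ` {..<length Fs})"
      using Max_ge[OF fin(1)] by (meson image_eqI lessThan_iff order_trans)
  qed
  moreover have "Max (?val ` {..<length Fs}) < dist_threshold ?G"
    using Max_in[OF fin] block_value_lt_dist_threshold by auto
  ultimately show ?thesis unfolding M by simp
qed

end

theorem theorem4p3:
  fixes Gs :: "nat \<Rightarrow> 'a graph" and t :: "nat \<Rightarrow> nat" and k :: nat
  assumes "k \<ge> 1"
    and "\<And>i. i < k \<Longrightarrow> graph (Gs i)"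
    and "\<And>i. i < k \<Longrightarrow> connected_graph (Gs i)"
    and "\<And>i. i < k \<Longrightarrow> prime_graph (Gs i)"
    and "\<And>i j. i < k \<Longrightarrow> j < k \<Longrightarrow> i \<noteq> j \<Longrightarrow> \<not> iso (Gs i) (Gs j)"
    and "\<And>i. i < k \<Longrightarrow> t i \<ge> 1"
    and "G = cartprod (concat (map (\<lambda>i. replicate (t i) (Gs i)) [0..<k]))"
    and "connected_graph G"
  shows "dist_threshold G =
     Max ((\<lambda>i. (dist_threshold (cpower (Gs i) (t i)) - 1)
               * (card (verts G) div card (verts (cpower (Gs i) (t i))))) ` {..<k}) + 1"
proof -
  define Fs where "Fs = map (\<lambda>i. replicate (t i) (Gs i)) [0..<k]"
  interpret prime_factor_blocks Fs
  proof
    show "connected_graphs (concat Fs)" "\<forall>H\<in>set (concat Fs). prime_graph H"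
      using assms(2-4) by (auto simp: Fs_def connected_graphs_def)
    fix i j assume "i < length Fs" "j < length Fs" "i \<noteq> j"
    then show "\<forall>H\<in>set (Fs!i). \<forall>K\<in>set (Fs!j). \<not> iso H K" using assms(5) by (simp add: Fs_def)
  qed
  have "Fs \<noteq> []" using assms(1) by (simp add: Fs_def)
  moreover have "(\<lambda>i. (dist_threshold (cartprod (Fs!i)) - 1)
       * (card (verts G) div card (verts (cartprod (Fs!i))))) ` {..<length Fs}
    = (\<lambda>i. (dist_threshold (cpower (Gs i) (t i)) - 1)
       * (card (verts G) div card (verts (cpower (Gs i) (t i))))) ` {..<k}"
    by (rule image_cong) (simp_all add: Fs_def cpower_def)
  ultimately show ?thesis
    using dist_threshold_cartprod_concat assms(7) unfolding Fs_def by metis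
qed

end
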